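(* $C_X(\mathcal{A})^*=\operatorname{cl}\{\exp y:\ y\in\mathbb{R}^{\mathcal{A}},\ (y,1)\in G_X(\mathcal{A})^*\}$, where $\exp$ is applied entrywise, $C_X(\mathcal{A})^*\subset\mathbb{R}^{\mathcal{A}}$ and $G_X(\mathcal{A})^*\subset\mathbb{R}^{\mathcal{A}}\times\mathbb{R}$ are dual cones with respect to standard inner products.
   Context: $X\subset\mathbb{R}^n$ is a nonempty closed convex set and $\mathcal{A}\subset\mathbb{R}^n$ is a nonempty finite set such that the functions $x\mapsto\exp(\alpha^Tx)$, $\alpha\in\mathcal{A}$, are linearly independent on $X$. $\mathbb{R}^{\mathcal{A}}$ denotes real vectors indexed by $\mathcal{A}$. $\mathcal{A}\nu=\sum_\alpha\alpha\nu_\alpha$. $\sigma_X(y)=\sup\{y^Tx:x\in X\}$. $N_\beta=\{\nu\in\mathbb{R}^{\mathcal{A}}:\nu_\alpha\ge0\ \forall\alpha\neq\beta,\ \sum_\alpha\nu_\alpha=0\}$. A vector $\nu^\star\in N_\beta$ is an $X$-circuit of $\mathcal{A}$ if (1) $\nu^\star\neq0$, (2) $\sigma_X(-\mathcal{A}\nu^\star)<\infty$, and (3) $\nu^\star$ cannot be written as a convex combination of two non-proportional vectors $\nu^{(1)},\nu^{(2)}\in N_\beta$ such that the map $\nu\mapsto\sigma_X(-\mathcal{A}\nu)$ is affine on the segment $[\nu^{(1)},\nu^{(2)}]$. $\Lambda_X(\mathcal{A})$ is the set of all $X$-circuits $\lambda$ (over all $\beta\in\mathcal{A}$) normalized so that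 the unique negative entry equals $-1$. Signomials $f=\sum_\alpha c_\alpha\mathrm{e}^\alpha$, $\mathrm{e}^\alpha(x)=\exp(\alpha^Tx)$, are identified with $c\in\mathbb{R}^{\mathcal{A}}$; $C_X(\mathcal{A},\beta)$ is the set of $c$ with $f$ nonnegative on $X$ and $c_\alpha\ge0$ for $\alpha\ne\beta$, and $C_X(\mathcal{A})=\sum_{\beta\in\mathcal{A}}C_X(\mathcal{A},\beta)$. The functional form of $\lambda\in\Lambda_X(\mathcal{A})$ is $\phi_\lambda=(\lambda,\sigma_X(-\mathcal{A}\lambda))\in\mathbb{R}^{\mathcal{A}}\times\mathbb{R}$, i.e. $\phi_\lambda(y)=(y,1)^T\phi_\lambda=\sum_\alpha y_\alpha\lambda_\alpha+\sigma_X(-\mathcal{A}\lambda)$. The circuit graph is $G_X(\mathcal{A})=\operatorname{cone}(\{\phi_\lambda:\lambda\in\Lambda_X(\mathcal{A})\}\cup\{(0,1)\})\subset\mathbb{R}^{\mathcal{A}}\times\mathbb{R}$ (the convex conic hull, including the origin). *)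

theory Defs
  imports "HOL-Analysis.Analysis"
begin

text \<open>Vectors in R^A are represented as functions 'a => real vanishing outside A.\<close>

definition RA :: "'a set \<Rightarrow> ('a \<Rightarrow> real) set" where
  "RA A = {c. \<forall>\<alpha>. \<alpha> \<notin> A \<longrightarrow> c \<alpha> = 0}"

definition Amul :: "'a::euclidean_space set \<Rightarrow> ('a \<Rightarrow> real) \<Rightarrow> 'a" where
  "Amul A \<nu> = (\<Sum>\<alpha>\<in>A. \<nu> \<alpha> *\<^sub>R \<alpha>)"

definition supp_fun :: "'a::euclidean_space set \<Rightarrow> 'a \<Rightarrow> ereal" where
  "supp_fun X y = (SUP x\<in>X. ereal (y \<bullet> x))"

definition Nbeta :: "'a set \<Rightarrow> 'a \<Rightarrow> ('a \<Rightarrow> real) set" where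
  "Nbeta A \<beta> = {\<nu> \<in> RA A. (\<forall>\<alpha>\<in>A. \<alpha> \<noteq> \<beta> \<longrightarrow> \<nu> \<alpha> \<ge> 0) \<and> (\<Sum>\<alpha>\<in>A. \<nu> \<alpha>) = 0}"

definition proportional :: "('a \<Rightarrow> real) \<Rightarrow> ('a \<Rightarrow> real) \<Rightarrow> bool" where
  "proportional u v \<longleftrightarrow> (\<exists>t::real. u = (\<lambda>\<alpha>. t * v \<alpha>)) \<or> (\<exists>t::real. v = (\<lambda>\<alpha>. t * u \<alpha>))"

definition affine_on_segment :: "'a::euclidean_space set \<Rightarrow> 'a set \<Rightarrow> ('a \<Rightarrow> real) \<Rightarrow> ('a \<Rightarrow> real) \<Rightarrow> bool" where
  "affine_on_segment X A u v \<longleftrightarrow>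
     (\<exists>a b::real. \<forall>t\<in>{0..1}.
        supp_fun X (- Amul A (\<lambda>\<alpha>. (1 - t) * u \<alpha> + t * v \<alpha>)) = ereal (a + b * t))"

definition X_circuit :: "'a::euclidean_space set \<Rightarrow> 'a set \<Rightarrow> 'a \<Rightarrow> ('a \<Rightarrow> real) \<Rightarrow> bool" where
  "X_circuit X A \<beta> \<nu> \<longleftrightarrow>
     \<nu> \<in> Nbeta A \<beta> \<and> \<nu> \<noteq> (\<lambda>_. 0) \<and> supp_fun X (- Amul A \<nu>) < \<infinity> \<and>
     \<not> (\<exists>\<nu>1 \<in> Nbeta A \<beta>. \<exists>\<nu>2 \<in> Nbeta A \<beta>. \<exists>\<theta>::real. 0 < \<theta> \<and> \<theta> < 1 \<and>
          \<nu> = (\<lambda>\<alpha>. \<theta> * \<nu>1 \<alpha> + (1 - \<theta>) * \<nu>2 \<alpha>) \<and>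
          \<not> proportional \<nu>1 \<nu>2 \<and> affine_on_segment X A \<nu>1 \<nu>2)"

definition Lambda_X :: "'a::euclidean_space set \<Rightarrow> 'a set \<Rightarrow> ('a \<Rightarrow> real) set" where
  "Lambda_X X A = {l. \<exists>\<beta>\<in>A. X_circuit X A \<beta> l \<and> l \<beta> = -1}"

definition phi :: "'a::euclidean_space set \<Rightarrow> 'a set \<Rightarrow> ('a \<Rightarrow> real) \<Rightarrow> ('a \<Rightarrow> real) \<times> real" where
  "phi X A l = (l, real_of_ereal (supp_fun X (- Amul A l)))"

text \<open>circuit graph: convex conic hull of the phi_lambda and (0,1), including the origin\<close>
definition circuit_graph :: "'a::euclidean_space set \<Rightarrow> 'a set \<Rightarrow> (('a \<Rightarrow> real) \<times> real) set" where
  "circuit_graph X A =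
     {p. \<exists>F c t. finite F \<and> F \<subseteq> Lambda_X X A \<and> (\<forall>l\<in>F. c l \<ge> (0::real)) \<and> t \<ge> (0::real) \<and>
          p = (\<lambda>\<alpha>. \<Sum>l\<in>F. c l * fst (phi X A l) \<alpha>, (\<Sum>l\<in>F. c l * snd (phi X A l)) + t)}"

definition circuit_graph_dual :: "'a::euclidean_space set \<Rightarrow> 'a set \<Rightarrow> (('a \<Rightarrow> real) \<times> real) set" where
  "circuit_graph_dual X A =
     {(y, s). y \<in> RA A \<and> (\<forall>(u, r)\<in>circuit_graph X A. (\<Sum>\<alpha>\<in>A. y \<alpha> * u \<alpha>) + s * r \<ge> 0)}"

definition signomial :: "'a::euclidean_space set \<Rightarrow> ('a \<Rightarrow> real) \<Rightarrow> 'a \<Rightarrow> real" where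
  "signomial A c x = (\<Sum>\<alpha>\<in>A. c \<alpha> * exp (\<alpha> \<bullet> x))"

definition SAGE_beta :: "'a::euclidean_space set \<Rightarrow> 'a set \<Rightarrow> 'a \<Rightarrow> ('a \<Rightarrow> real) set" where
  "SAGE_beta X A \<beta> = {c \<in> RA A. (\<forall>x\<in>X. signomial A c x \<ge> 0) \<and> (\<forall>\<alpha>\<in>A. \<alpha> \<noteq> \<beta> \<longrightarrow> c \<alpha> \<ge> 0)}"

definition SAGE :: "'a::euclidean_space set \<Rightarrow> 'a set \<Rightarrow> ('a \<Rightarrow> real) set" where
  "SAGE X A = {c. \<exists>f. (\<forall>\<beta>\<in>A. f \<beta> \<in> SAGE_beta X A \<beta>) \<and> c = (\<lambda>\<alpha>. \<Sum>\<beta>\<in>A. f \<beta> \<alpha>)}"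

definition SAGE_dual :: "'a::euclidean_space set \<Rightarrow> 'a set \<Rightarrow> ('a \<Rightarrow> real) set" where
  "SAGE_dual X A = {v \<in> RA A. \<forall>c\<in>SAGE X A. (\<Sum>\<alpha>\<in>A. v \<alpha> * c \<alpha>) \<ge> 0}"

definition exp_vec :: "'a set \<Rightarrow> ('a \<Rightarrow> real) \<Rightarrow> ('a \<Rightarrow> real)" where
  "exp_vec A y = (\<lambda>\<alpha>. if \<alpha> \<in> A then exp (y \<alpha>) else 0)"

end

theory Submission
  imports Defs
begin

text \<open>
  Write \<open>\<phi>\<^sub>\<nu>(y) = y\<cdot>\<nu> + \<sigma>\<^sub>X(-A\<nu>)\<close>, so that \<open>(y,1) \<in> G\<^sub>X(A)\<^sup>*\<close> means
  \<open>\<phi>\<^sub>\<lambda>(y) \<ge> 0\<close> for every normalized circuit \<open>\<lambda>\<close>.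

  If this holds, it holds for every \<open>\<nu> \<in> N\<^sub>\<beta>\<close>: \<open>\<nu> \<mapsto> \<phi>\<^sub>\<nu>(y)\<close> is convex and lower
  semicontinuous on the compact slice \<open>\<nu>\<^sub>\<beta> = -1\<close> of \<open>N\<^sub>\<beta>\<close>, and among its minimizers one of
  maximal Euclidean norm cannot be split along a segment on which \<open>\<sigma>\<^sub>X\<close> is affine, so it is a
  circuit. Separating \<open>(y\<^sub>\<alpha> - y\<^sub>\<beta>)\<^sub>\<alpha>\<close> from the convex set
  \<open>{s. \<exists>x\<in>X. \<forall>\<alpha>\<noteq>\<beta>. (\<alpha> - \<beta>)\<cdot>x \<le> s\<^sub>\<alpha>}\<close> by a nearest point then shows that this set comes
  arbitrarily close to it, and monotonicity of the AGE signomials gives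
  \<open>\<Sum>\<^sub>\<alpha> e\<^bsup>y\<^sub>\<alpha>\<^esup> c\<^sub>\<alpha> \<ge> 0\<close> for all \<open>c \<in> C\<^sub>X(A,\<beta>)\<close>. So \<open>exp y\<close> lies in the closed cone \<open>C\<^sub>X(A)\<^sup>*\<close>.

  Conversely, for a strictly positive \<open>v \<in> C\<^sub>X(A)\<^sup>*\<close> and a circuit \<open>\<lambda>\<close> with \<open>\<lambda>\<^sub>\<beta> = -1\<close>,
  weighted AM-GM shows that \<open>c\<^sub>\<alpha> = \<lambda>\<^sub>\<alpha>/v\<^sub>\<alpha>\<close> (\<open>\<alpha> \<noteq> \<beta>\<close>),
  \<open>c\<^sub>\<beta> = -e\<^bsup>-\<phi>\<^sub>\<lambda>(ln v)\<^esup>/v\<^sub>\<beta>\<close> is in \<open>C\<^sub>X(A,\<beta>)\<close>, and \<open>v\<cdot>c = 1 - e\<^bsup>-\<phi>\<^sub>\<lambda>(ln v)\<^esup> \<ge> 0\<close>.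
  Every \<open>v \<in> C\<^sub>X(A)\<^sup>*\<close> is the limit of the strictly positive \<open>v + t\<cdot>exp(Ax\<^sub>0)\<close>.
\<close>

section \<open>Sequences and separation in finitely many coordinates\<close>

lemma finite_coords_convergent_subseq:
  fixes f :: "nat \<Rightarrow> 'i \<Rightarrow> real"
  assumes "finite I" and "\<And>i. i \<in> I \<Longrightarrow> Bseq (\<lambda>n. f n i)"
  shows "\<exists>r L. strict_mono r \<and> (\<forall>i\<in>I. (\<lambda>n. f (r n) i) \<longlonglongrightarrow> L i)"
  using assms
proof (induction I rule: finite_induct)
  case empty
  have "strict_mono (id :: nat \<Rightarrow> nat)" by (simp add: strict_mono_def)
  then show ?case by auto
next
  case (insert a I)
  then obtain r L where r: "strict_mono r" and L: "\<forall>i\<in>I. (\<lambda>n. f (r n) i) \<longlonglongrightarrow> L i"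
    by auto
  obtain r' where r': "strict_mono r'" and mono: "monoseq (\<lambda>n. f (r (r' n)) a)"
    using seq_monosub[of "\<lambda>n. f (r n) a"] by blast
  have "Bseq (\<lambda>n. f (r (r' n)) a)"
    using Bseq_subseq[of "\<lambda>n. f n a" "\<lambda>n. r (r' n)"] insert.prems by simp
  with mono have "convergent (\<lambda>n. f (r (r' n)) a)"
    by (simp add: Bseq_monoseq_convergent)
  then obtain La where La: "(\<lambda>n. f (r (r' n)) a) \<longlonglongrightarrow> La"
    unfolding convergent_def by auto
  have "(\<lambda>n. f ((r \<circ> r') n) i) \<longlonglongrightarrow> (L(a := La)) i" if "i \<in> insert a I" for i
  proof (cases "i = a")
    case False
    with that L have "((\<lambda>n. f (r n) i) \<circ> r') \<longlonglongrightarrow> L i"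
      using LIMSEQ_subseq_LIMSEQ r' by auto
    with False show ?thesis by (simp add: o_def)
  qed (use La in simp)
  moreover have "strict_mono (r \<circ> r')" using r r' by (rule strict_mono_o)
  ultimately show ?case by (intro exI[of _ "r \<circ> r'"] exI[of _ "L(a := La)"]) (simp add: o_def)
qed

lemma minimizing_sequence:
  fixes f :: "'b \<Rightarrow> real"
  assumes "S \<noteq> {}" "bdd_below (f ` S)"
  obtains g where "\<And>n. g n \<in> S" "(\<lambda>n. f (g n)) \<longlonglongrightarrow> Inf (f ` S)"
proof -
  have "Inf (f ` S) \<in> closure (f ` S)"
    using assms by (intro closure_contains_Inf) auto
  then obtain u where u: "\<And>n. u n \<in> f ` S" "u \<longlonglongrightarrow> Inf (f ` S)"
    unfolding closure_sequential by blast
  have "\<forall>n. \<exists>s. s \<in> S \<and> u n = f s" using u(1) by blast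
  then obtain g where g: "\<And>n. g n \<in> S \<and> u n = f (g n)" by metis
  then have "(\<lambda>n. f (g n)) = u" by auto
  with g u(2) that show thesis by auto
qed

lemma abs_le_square_plus_one: "\<bar>u::real\<bar> \<le> u\<^sup>2 + 1"
proof -
  have "0 \<le> (\<bar>u\<bar> - 1)\<^sup>2" by simp
  then show ?thesis by (simp add: power2_eq_square algebra_simps abs_mult_self_eq)
qed

lemma nearest_limit_point:
  fixes D :: "('i \<Rightarrow> real) set" and z :: "'i \<Rightarrow> real"
  assumes "finite I" "D \<noteq> {}"
  obtains p g where "\<forall>n. g n \<in> D" "\<forall>i\<in>I. (\<lambda>n. g n i) \<longlonglongrightarrow> p i"
    "\<forall>s\<in>D. (\<Sum>i\<in>I. (p i - z i)\<^sup>2) \<le> (\<Sum>i\<in>I. (s i - z i)\<^sup>2)"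
proof -
  define d where "d s = (\<Sum>i\<in>I. (s i - z i)\<^sup>2)" for s
  define \<delta> where "\<delta> = Inf (d ` D)"
  have bdd: "bdd_below (d ` D)"
    unfolding d_def by (rule bdd_belowI[of _ 0]) (auto intro: sum_nonneg)
  obtain g where g: "\<And>n. g n \<in> D" and g_lim: "(\<lambda>n. d (g n)) \<longlonglongrightarrow> \<delta>"
    by (rule minimizing_sequence[OF assms(2) bdd, folded \<delta>_def]) blast
  have "Bseq (\<lambda>n. d (g n))"
    using g_lim by (intro convergent_imp_Bseq convergentI)
  then obtain B where B: "\<And>n. norm (d (g n)) \<le> B"
    unfolding Bseq_def by auto
  have bounded: "Bseq (\<lambda>n. g n i)" if "i \<in> I" for i
  proof -
    have "\<bar>g n i\<bar> \<le> B + 1 + \<bar>z i\<bar>" for n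
    proof -
      have "(g n i - z i)\<^sup>2 \<le> d (g n)"
        unfolding d_def by (rule member_le_sum) (use that assms(1) in auto)
      with B[of n] abs_le_square_plus_one[of "g n i - z i"] show ?thesis by auto
    qed
    then show ?thesis by (intro BseqI'[of _ "B + 1 + \<bar>z i\<bar>"]) simp
  qed
  obtain r p where r: "strict_mono r" and p: "\<forall>i\<in>I. (\<lambda>n. g (r n) i) \<longlonglongrightarrow> p i"
    using finite_coords_convergent_subseq[of I g] assms(1) bounded by blast
  have "(\<lambda>n. d (g (r n))) \<longlonglongrightarrow> d p"
    unfolding d_def using p by (intro tendsto_intros tendsto_sum) auto
  moreover have "(\<lambda>n. d (g (r n))) \<longlonglongrightarrow> \<delta>"
    using LIMSEQ_subseq_LIMSEQ[OF g_lim r] by (simp add: o_def)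
  ultimately have "d p = \<delta>" by (rule LIMSEQ_unique)
  then have "\<forall>s\<in>D. d p \<le> d s"
    using bdd unfolding \<delta>_def by (simp add: cInf_lower)
  with g p show thesis
    by (intro that[of "\<lambda>n. g (r n)" p]) (simp_all add: d_def)
qed

lemma nearest_point_variational:
  fixes D :: "('i \<Rightarrow> real) set" and z p :: "'i \<Rightarrow> real"
  assumes convex: "\<And>s s' t. s \<in> D \<Longrightarrow> s' \<in> D \<Longrightarrow> 0 \<le> t \<Longrightarrow> t \<le> 1 \<Longrightarrow>
                   (\<lambda>i. (1 - t) * s i + t * s' i) \<in> D"
    and g: "\<forall>n. g n \<in> D" and p: "\<forall>i\<in>I. (\<lambda>n. g n i) \<longlonglongrightarrow> p i"
    and nearest: "\<forall>s\<in>D. (\<Sum>i\<in>I. (p i - z i)\<^sup>2) \<le> (\<Sum>i\<in>I. (s i - z i)\<^sup>2)"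
    and s: "s \<in> D"
  shows "(\<Sum>i\<in>I. (s i - p i) * (z i - p i)) \<le> 0"
proof -
  define d where "d s = (\<Sum>i\<in>I. (s i - z i)\<^sup>2)" for s
  define W where "W = (\<Sum>i\<in>I. (s i - p i) * (z i - p i))"
  define V where "V = (\<Sum>i\<in>I. (s i - p i)\<^sup>2)"
  \<comment> \<open>moving from \<open>p\<close> towards \<open>s\<close> changes the squared distance by \<open>-2tW + t\<^sup>2V\<close>\<close>
  have "2 * W \<le> t * V" if t: "0 < t" "t \<le> 1" for t
  proof -
    have "(\<lambda>n. d (\<lambda>i. (1 - t) * g n i + t * s i)) \<longlonglongrightarrow> d (\<lambda>i. (1 - t) * p i + t * s i)"
      unfolding d_def using p by (intro tendsto_intros tendsto_sum) auto
    then have "d p \<le> d (\<lambda>i. (1 - t) * p i + t * s i)"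
      by (rule LIMSEQ_le_const) (use nearest convex g s t in \<open>auto simp: d_def\<close>)
    also have "d (\<lambda>i. (1 - t) * p i + t * s i) = d p - 2 * t * W + t\<^sup>2 * V"
      unfolding d_def W_def V_def
      by (simp add: sum_subtractf sum.distrib sum_distrib_left power2_eq_square algebra_simps)
    finally have "t * (2 * W) \<le> t * (t * V)"
      by (simp add: power2_eq_square algebra_simps)
    with t show ?thesis by simp
  qed
  then have "\<forall>n. 2 * W \<le> inverse (real (Suc n)) * V"
    by (simp add: inverse_le_1_iff)
  moreover have "(\<lambda>n. inverse (real (Suc n)) * V) \<longlonglongrightarrow> 0 * V"
    by (intro tendsto_intros LIMSEQ_inverse_real_of_nat)
  ultimately have "2 * W \<le> 0"
    using LIMSEQ_le_const[of _ "0 * V" "2 * W"] by auto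
  then show ?thesis unfolding W_def by simp
qed

lemma nearest_point_separation:
  fixes D :: "('i \<Rightarrow> real) set" and z :: "'i \<Rightarrow> real"
  assumes "finite I" "D \<noteq> {}"
    and convex: "\<And>s s' t. s \<in> D \<Longrightarrow> s' \<in> D \<Longrightarrow> 0 \<le> t \<Longrightarrow> t \<le> 1 \<Longrightarrow>
                   (\<lambda>i. (1 - t) * s i + t * s' i) \<in> D"
    and far: "\<And>s. s \<in> D \<Longrightarrow> \<epsilon> \<le> (\<Sum>i\<in>I. (s i - z i)\<^sup>2)"
  obtains \<mu> where "\<And>s. s \<in> D \<Longrightarrow> (\<Sum>i\<in>I. \<mu> i * s i) + \<epsilon> \<le> (\<Sum>i\<in>I. \<mu> i * z i)"
proof -
  obtain p g where g: "\<forall>n. g n \<in> D" and p: "\<forall>i\<in>I. (\<lambda>n. g n i) \<longlonglongrightarrow> p i"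
    and nearest: "\<forall>s\<in>D. (\<Sum>i\<in>I. (p i - z i)\<^sup>2) \<le> (\<Sum>i\<in>I. (s i - z i)\<^sup>2)"
    by (rule nearest_limit_point[OF assms(1,2)])
  have "(\<lambda>n. \<Sum>i\<in>I. (g n i - z i)\<^sup>2) \<longlonglongrightarrow> (\<Sum>i\<in>I. (p i - z i)\<^sup>2)"
    using p by (intro tendsto_intros tendsto_sum) auto
  then have "\<epsilon> \<le> (\<Sum>i\<in>I. (p i - z i)\<^sup>2)"
    by (rule LIMSEQ_le_const) (use g far in auto)
  show thesis
  proof (rule that[of "\<lambda>i. z i - p i"])
    fix s assume "s \<in> D"
    have "(\<Sum>i\<in>I. (z i - p i) * z i) - (\<Sum>i\<in>I. (z i - p i) * s i)
        = (\<Sum>i\<in>I. (p i - z i)\<^sup>2) - (\<Sum>i\<in>I. (s i - p i) * (z i - p i))"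
      by (simp add: sum_subtractf[symmetric] power2_eq_square algebra_simps)
    with nearest_point_variational[OF convex g p nearest \<open>s \<in> D\<close>] \<open>\<epsilon> \<le> (\<Sum>i\<in>I. (p i - z i)\<^sup>2)\<close>
    show "(\<Sum>i\<in>I. (z i - p i) * s i) + \<epsilon> \<le> (\<Sum>i\<in>I. (z i - p i) * z i)"
      by linarith
  qed
qed

lemma separating_normal_nonpos:
  fixes D :: "('i \<Rightarrow> real) set"
  assumes "finite I" "s\<^sub>0 \<in> D" and up: "\<And>s i t. s \<in> D \<Longrightarrow> 0 \<le> t \<Longrightarrow> s(i := s i + t) \<in> D"
    and bounded: "\<And>s. s \<in> D \<Longrightarrow> (\<Sum>i\<in>I. \<mu> i * s i) \<le> b" and "i \<in> I"
  shows "\<mu> i \<le> 0"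
proof (rule ccontr)
  assume "\<not> \<mu> i \<le> 0"
  define t where "t = (\<bar>b - (\<Sum>j\<in>I. \<mu> j * s\<^sub>0 j)\<bar> + 1) / \<mu> i"
  have "0 \<le> t" using \<open>\<not> \<mu> i \<le> 0\<close> unfolding t_def by simp
  have "(\<Sum>j\<in>I. \<mu> j * (s\<^sub>0(i := s\<^sub>0 i + t)) j) = (\<Sum>j\<in>I. \<mu> j * s\<^sub>0 j) + \<mu> i * t"
    using assms(1,5) by (simp add: sum.remove[of I i] algebra_simps)
  also have "\<mu> i * t = \<bar>b - (\<Sum>j\<in>I. \<mu> j * s\<^sub>0 j)\<bar> + 1"
    using \<open>\<not> \<mu> i \<le> 0\<close> unfolding t_def by simp
  finally show False
    using bounded[OF up[OF assms(2) \<open>0 \<le> t\<close>, of i]] by linarith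
qed

lemma sum_squares_less_imp_abs_less:
  fixes f :: "'i \<Rightarrow> real"
  assumes "finite I" "i \<in> I" "(\<Sum>j\<in>I. (f j)\<^sup>2) < \<epsilon>\<^sup>2" "0 \<le> \<epsilon>"
  shows "\<bar>f i\<bar> < \<epsilon>"
proof -
  have "(f i)\<^sup>2 \<le> (\<Sum>j\<in>I. (f j)\<^sup>2)" by (rule member_le_sum) (use assms in auto)
  with assms(3) have "\<bar>f i\<bar>\<^sup>2 < \<epsilon>\<^sup>2" by simp
  then show ?thesis using assms(4) by (rule power2_less_imp_less)
qed

lemma sum_squares_strictly_convex:
  fixes u v :: "'i \<Rightarrow> real"
  assumes "finite I" "i\<^sub>0 \<in> I" "u i\<^sub>0 \<noteq> v i\<^sub>0" "0 < \<kappa>" "\<kappa> < 1"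
  shows "(\<Sum>i\<in>I. (\<kappa> * u i + (1 - \<kappa>) * v i)\<^sup>2) < \<kappa> * (\<Sum>i\<in>I. (u i)\<^sup>2) + (1 - \<kappa>) * (\<Sum>i\<in>I. (v i)\<^sup>2)"
proof -
  have "(\<kappa> * u i + (1 - \<kappa>) * v i)\<^sup>2 = \<kappa> * (u i)\<^sup>2 + (1 - \<kappa>) * (v i)\<^sup>2 - \<kappa> * (1 - \<kappa>) * (u i - v i)\<^sup>2"
    for i by (simp add: power2_eq_square algebra_simps)
  then have "(\<Sum>i\<in>I. (\<kappa> * u i + (1 - \<kappa>) * v i)\<^sup>2)
      = \<kappa> * (\<Sum>i\<in>I. (u i)\<^sup>2) + (1 - \<kappa>) * (\<Sum>i\<in>I. (v i)\<^sup>2) - \<kappa> * (1 - \<kappa>) * (\<Sum>i\<in>I. (u i - v i)\<^sup>2)"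
    by (simp add: sum.distrib sum_subtractf sum_distrib_left)
  moreover have "0 < (\<Sum>i\<in>I. (u i - v i)\<^sup>2)"
  proof -
    have "0 < (u i\<^sub>0 - v i\<^sub>0)\<^sup>2" using assms(3) by simp
    also have "\<dots> \<le> (\<Sum>i\<in>I. (u i - v i)\<^sup>2)" by (rule member_le_sum) (use assms(1,2) in auto)
    finally show ?thesis .
  qed
  ultimately show ?thesis using assms(4,5) by simp
qed

lemma sum_remove_shift:
  fixes \<nu> w :: "'a \<Rightarrow> real"
  assumes "finite A" "\<beta> \<in> A" "(\<Sum>\<alpha>\<in>A. \<nu> \<alpha>) = 0"
  shows "(\<Sum>\<alpha>\<in>A. \<nu> \<alpha> * w \<alpha>) = (\<Sum>\<alpha>\<in>A - {\<beta>}. \<nu> \<alpha> * (w \<alpha> - w \<beta>))"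
proof -
  have "(\<Sum>\<alpha>\<in>A. \<nu> \<alpha> * w \<alpha>) = (\<Sum>\<alpha>\<in>A. \<nu> \<alpha> * (w \<alpha> - w \<beta>)) + w \<beta> * (\<Sum>\<alpha>\<in>A. \<nu> \<alpha>)"
    by (simp add: algebra_simps sum.distrib sum_subtractf sum_distrib_left)
  also have "\<dots> = (\<Sum>\<alpha>\<in>A - {\<beta>}. \<nu> \<alpha> * (w \<alpha> - w \<beta>))"
    using assms by (simp add: sum.remove)
  finally show ?thesis .
qed

lemma sum_exp_factor:
  fixes c w :: "'a \<Rightarrow> real"
  assumes "finite A" "\<beta> \<in> A"
  shows "(\<Sum>\<alpha>\<in>A. c \<alpha> * exp (w \<alpha>)) = exp (w \<beta>) * (c \<beta> + (\<Sum>\<alpha>\<in>A - {\<beta>}. c \<alpha> * exp (w \<alpha> - w \<beta>)))"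
proof -
  have "(\<Sum>\<alpha>\<in>A - {\<beta>}. c \<alpha> * exp (w \<alpha>)) = exp (w \<beta>) * (\<Sum>\<alpha>\<in>A - {\<beta>}. c \<alpha> * exp (w \<alpha> - w \<beta>))"
    by (simp add: sum_distrib_left exp_diff)
  then show ?thesis using sum.remove[OF assms, of "\<lambda>\<alpha>. c \<alpha> * exp (w \<alpha>)"] by (simp add: algebra_simps)
qed

section \<open>The support function of the exponents\<close>

definition sigmaA :: "'a::euclidean_space set \<Rightarrow> 'a set \<Rightarrow> ('a \<Rightarrow> real) \<Rightarrow> ereal" where
  "sigmaA X A \<nu> = supp_fun X (- Amul A \<nu>)"

text \<open>The value \<open>\<phi>\<^sub>\<nu>(y)\<close> of the functional form; \<open>real_of_ereal\<close> makes it \<open>y\<cdot>\<nu>\<close> when \<open>\<sigma>\<close> is infinite.\<close>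
definition phi_at :: "'a::euclidean_space set \<Rightarrow> 'a set \<Rightarrow> ('a \<Rightarrow> real) \<Rightarrow> ('a \<Rightarrow> real) \<Rightarrow> real" where
  "phi_at X A y \<nu> = (\<Sum>\<alpha>\<in>A. y \<alpha> * \<nu> \<alpha>) + real_of_ereal (sigmaA X A \<nu>)"

lemma Amul_inner: "Amul A \<nu> \<bullet> x = (\<Sum>\<alpha>\<in>A. \<nu> \<alpha> * (\<alpha> \<bullet> x))"
  unfolding Amul_def by (simp add: inner_sum_left)

lemma sigmaA_ge: "x \<in> X \<Longrightarrow> ereal (- (\<Sum>\<alpha>\<in>A. \<nu> \<alpha> * (\<alpha> \<bullet> x))) \<le> sigmaA X A \<nu>"
  unfolding sigmaA_def supp_fun_def by (rule SUP_upper2[of x]) (simp_all add: Amul_inner)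

lemma sigmaA_le: "(\<And>x. x \<in> X \<Longrightarrow> - (\<Sum>\<alpha>\<in>A. \<nu> \<alpha> * (\<alpha> \<bullet> x)) \<le> r) \<Longrightarrow> sigmaA X A \<nu> \<le> ereal r"
  unfolding sigmaA_def supp_fun_def by (rule SUP_least) (simp add: Amul_inner)

lemma sigmaA_real:
  assumes "X \<noteq> {}" "sigmaA X A \<nu> < \<infinity>"
  shows "sigmaA X A \<nu> = ereal (real_of_ereal (sigmaA X A \<nu>))"
proof -
  from assms(1) obtain x where "x \<in> X" by auto
  from sigmaA_ge[OF this, where A = A and \<nu> = \<nu>] have "sigmaA X A \<nu> \<noteq> -\<infinity>" by auto
  with assms(2) show ?thesis by (cases "sigmaA X A \<nu>") auto
qed

lemma sigmaA_ge_real: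
  assumes "X \<noteq> {}" "x \<in> X" "sigmaA X A \<nu> < \<infinity>"
  shows "- (\<Sum>\<alpha>\<in>A. \<nu> \<alpha> * (\<alpha> \<bullet> x)) \<le> real_of_ereal (sigmaA X A \<nu>)"
proof -
  have "ereal (- (\<Sum>\<alpha>\<in>A. \<nu> \<alpha> * (\<alpha> \<bullet> x))) \<le> sigmaA X A \<nu>"
    by (rule sigmaA_ge[OF assms(2)])
  also have "\<dots> = ereal (real_of_ereal (sigmaA X A \<nu>))"
    by (rule sigmaA_real[OF assms(1,3)])
  finally show ?thesis by simp
qed

lemma sigmaA_scale:
  assumes "X \<noteq> {}" "0 \<le> t"
  shows "sigmaA X A (\<lambda>\<alpha>. t * \<nu> \<alpha>) = ereal t * sigmaA X A \<nu>"
proof -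
  have "Amul A (\<lambda>\<alpha>. t * \<nu> \<alpha>) = t *\<^sub>R Amul A \<nu>"
    unfolding Amul_def by (simp add: scaleR_sum_right)
  then show ?thesis
    unfolding sigmaA_def supp_fun_def using Sup_ereal_mult_left'[OF assms]
    by (simp add: inner_scaleR_left image_image)
qed

lemma sigmaA_zero: "X \<noteq> {} \<Longrightarrow> sigmaA X A (\<lambda>_. 0) = 0"
  unfolding sigmaA_def supp_fun_def Amul_def by (simp add: zero_ereal_def)

lemma phi_at_scale:
  assumes "X \<noteq> {}" "0 \<le> t"
  shows "phi_at X A y (\<lambda>\<alpha>. t * \<nu> \<alpha>) = t * phi_at X A y \<nu>"
  unfolding phi_at_def sigmaA_scale[OF assms]
  by (simp add: sum_distrib_left distrib_left mult.left_commute)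

lemma affine_on_segment_phi_at:
  assumes "X \<noteq> {}" "affine_on_segment X A \<nu>\<^sub>1 \<nu>\<^sub>2" "0 \<le> \<theta>" "\<theta> \<le> 1"
  shows "sigmaA X A \<nu>\<^sub>1 < \<infinity>" "sigmaA X A \<nu>\<^sub>2 < \<infinity>"
    and "phi_at X A y (\<lambda>\<alpha>. \<theta> * \<nu>\<^sub>1 \<alpha> + (1 - \<theta>) * \<nu>\<^sub>2 \<alpha>)
           = \<theta> * phi_at X A y \<nu>\<^sub>1 + (1 - \<theta>) * phi_at X A y \<nu>\<^sub>2"
proof -
  obtain a b where ab: "\<And>t. t \<in> {0..1} \<Longrightarrow>
      sigmaA X A (\<lambda>\<alpha>. (1 - t) * \<nu>\<^sub>1 \<alpha> + t * \<nu>\<^sub>2 \<alpha>) = ereal (a + b * t)"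
    using assms(2) unfolding affine_on_segment_def sigmaA_def by blast
  have \<sigma>1: "sigmaA X A \<nu>\<^sub>1 = ereal a" using ab[of 0] by simp
  have \<sigma>2: "sigmaA X A \<nu>\<^sub>2 = ereal (a + b)" using ab[of 1] by simp
  show "sigmaA X A \<nu>\<^sub>1 < \<infinity>" "sigmaA X A \<nu>\<^sub>2 < \<infinity>" using \<sigma>1 \<sigma>2 by simp_all
  have \<sigma>\<theta>: "sigmaA X A (\<lambda>\<alpha>. \<theta> * \<nu>\<^sub>1 \<alpha> + (1 - \<theta>) * \<nu>\<^sub>2 \<alpha>) = ereal (a + b * (1 - \<theta>))"
    using ab[of "1 - \<theta>"] assms(3,4) by simp
  have lin: "(\<Sum>\<alpha>\<in>A. y \<alpha> * (\<theta> * \<nu>\<^sub>1 \<alpha> + (1 - \<theta>) * \<nu>\<^sub>2 \<alpha>))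
      = \<theta> * (\<Sum>\<alpha>\<in>A. y \<alpha> * \<nu>\<^sub>1 \<alpha>) + (1 - \<theta>) * (\<Sum>\<alpha>\<in>A. y \<alpha> * \<nu>\<^sub>2 \<alpha>)"
    by (simp add: distrib_left sum.distrib sum_distrib_left mult.left_commute)
  show "phi_at X A y (\<lambda>\<alpha>. \<theta> * \<nu>\<^sub>1 \<alpha> + (1 - \<theta>) * \<nu>\<^sub>2 \<alpha>)
      = \<theta> * phi_at X A y \<nu>\<^sub>1 + (1 - \<theta>) * phi_at X A y \<nu>\<^sub>2"
    unfolding phi_at_def \<sigma>1 \<sigma>2 \<sigma>\<theta> lin by (simp add: algebra_simps)
qed

lemma circuit_graph_dual_iff:
  "(y, 1) \<in> circuit_graph_dual X A \<longleftrightarrow> y \<in> RA A \<and> (\<forall>l\<in>Lambda_X X A. 0 \<le> phi_at X A y l)"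
proof safe
  fix l assume "(y, 1) \<in> circuit_graph_dual X A" "l \<in> Lambda_X X A"
  moreover have "phi X A l \<in> circuit_graph X A"
    unfolding circuit_graph_def
    by (rule CollectI, rule exI[of _ "{l}"], rule exI[of _ "\<lambda>_. 1"], rule exI[of _ 0])
       (use \<open>l \<in> Lambda_X X A\<close> in simp)
  ultimately show "0 \<le> phi_at X A y l"
    unfolding circuit_graph_dual_def phi_at_def phi_def sigmaA_def by auto
next
  assume "(y, 1) \<in> circuit_graph_dual X A"
  then show "y \<in> RA A" unfolding circuit_graph_dual_def by simp
next
  assume y: "y \<in> RA A" and nonneg: "\<forall>l\<in>Lambda_X X A. 0 \<le> phi_at X A y l"
  have "0 \<le> (\<Sum>\<alpha>\<in>A. y \<alpha> * u \<alpha>) + r" if "(u, r) \<in> circuit_graph X A" for u r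
  proof -
    from that obtain F c t where F: "finite F" "F \<subseteq> Lambda_X X A" "\<forall>l\<in>F. 0 \<le> c l" "0 \<le> t"
      and u: "u = (\<lambda>\<alpha>. \<Sum>l\<in>F. c l * l \<alpha>)"
      and r: "r = (\<Sum>l\<in>F. c l * real_of_ereal (sigmaA X A l)) + t"
      unfolding circuit_graph_def phi_def sigmaA_def by auto
    have "(\<Sum>\<alpha>\<in>A. y \<alpha> * u \<alpha>) = (\<Sum>l\<in>F. c l * (\<Sum>\<alpha>\<in>A. y \<alpha> * l \<alpha>))"
      unfolding u by (simp add: sum_distrib_left sum.swap[of _ A] mult_ac)
    then have "(\<Sum>\<alpha>\<in>A. y \<alpha> * u \<alpha>) + r = (\<Sum>l\<in>F. c l * phi_at X A y l) + t"
      unfolding r phi_at_def by (simp add: distrib_left sum.distrib)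
    moreover have "0 \<le> (\<Sum>l\<in>F. c l * phi_at X A y l)"
      using F nonneg by (intro sum_nonneg mult_nonneg_nonneg) auto
    ultimately show ?thesis using F(4) by simp
  qed
  with y show "(y, 1) \<in> circuit_graph_dual X A"
    unfolding circuit_graph_dual_def by auto
qed

section \<open>Circuits minimize the functional form\<close>

lemma Nbeta_eq_neg_sum:
  assumes "\<nu> \<in> Nbeta A \<beta>" "finite A" "\<beta> \<in> A"
  shows "\<nu> \<beta> = - (\<Sum>\<alpha>\<in>A - {\<beta>}. \<nu> \<alpha>)"
  using assms sum.remove[of A \<beta> \<nu>] unfolding Nbeta_def by auto

lemma Nbeta_neg:
  assumes "\<nu> \<in> Nbeta A \<beta>" "finite A" "\<beta> \<in> A" "\<nu> \<noteq> (\<lambda>_. 0)"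
  shows "\<nu> \<beta> < 0"
proof (rule ccontr)
  assume "\<not> \<nu> \<beta> < 0"
  have nonneg: "\<forall>\<alpha>\<in>A - {\<beta>}. 0 \<le> \<nu> \<alpha>" using assms(1) unfolding Nbeta_def by auto
  then have "0 \<le> (\<Sum>\<alpha>\<in>A - {\<beta>}. \<nu> \<alpha>)" by (intro sum_nonneg) blast
  with \<open>\<not> \<nu> \<beta> < 0\<close> Nbeta_eq_neg_sum[OF assms(1-3)] have "(\<Sum>\<alpha>\<in>A - {\<beta>}. \<nu> \<alpha>) = 0"
    by linarith
  with nonneg assms(2) have "\<forall>\<alpha>\<in>A - {\<beta>}. \<nu> \<alpha> = 0"
    using sum_nonneg_eq_0_iff[of "A - {\<beta>}" \<nu>] by auto
  moreover have "\<nu> \<beta> = 0" using Nbeta_eq_neg_sum[OF assms(1-3)] calculation by simp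
  ultimately have "\<nu> = (\<lambda>_. 0)" using assms(1) unfolding Nbeta_def RA_def by (auto intro!: ext)
  with assms(4) show False ..
qed

definition Nbeta_dom :: "'a::euclidean_space set \<Rightarrow> 'a set \<Rightarrow> 'a \<Rightarrow> ('a \<Rightarrow> real) set" where
  "Nbeta_dom X A \<beta> = {\<nu> \<in> Nbeta A \<beta>. \<nu> \<beta> = -1 \<and> sigmaA X A \<nu> < \<infinity>}"

lemma Nbeta_dom_normalize:
  assumes "X \<noteq> {}" "\<nu> \<in> Nbeta A \<beta>" "\<nu> \<beta> < 0" "sigmaA X A \<nu> < \<infinity>"
  shows "(\<lambda>\<alpha>. (1 / - \<nu> \<beta>) * \<nu> \<alpha>) \<in> Nbeta_dom X A \<beta>"
proof -
  have "(\<Sum>\<alpha>\<in>A. (1 / - \<nu> \<beta>) * \<nu> \<alpha>) = (1 / - \<nu> \<beta>) * (\<Sum>\<alpha>\<in>A. \<nu> \<alpha>)"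
    by (simp add: sum_distrib_left)
  moreover have "sigmaA X A (\<lambda>\<alpha>. (1 / - \<nu> \<beta>) * \<nu> \<alpha>) < \<infinity>"
  proof -
    have "sigmaA X A (\<lambda>\<alpha>. (1 / - \<nu> \<beta>) * \<nu> \<alpha>) = ereal (1 / - \<nu> \<beta>) * sigmaA X A \<nu>"
      using assms(1,3) by (intro sigmaA_scale) auto
    also have "\<dots> = ereal (1 / - \<nu> \<beta> * real_of_ereal (sigmaA X A \<nu>))"
      by (subst sigmaA_real[OF assms(1,4)]) simp
    finally show ?thesis by simp
  qed
  ultimately show ?thesis
    using assms(2,3) unfolding Nbeta_dom_def Nbeta_def RA_def by (auto simp: divide_simps)
qed

lemma Nbeta_dom_bound:
  assumes "\<nu> \<in> Nbeta_dom X A \<beta>" "finite A" "\<beta> \<in> A" "\<alpha> \<in> A"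
  shows "\<bar>\<nu> \<alpha>\<bar> \<le> 1"
proof (cases "\<alpha> = \<beta>")
  case False
  have \<nu>: "\<nu> \<in> Nbeta A \<beta>" "\<nu> \<beta> = -1" using assms(1) unfolding Nbeta_dom_def by auto
  then have nonneg: "\<forall>\<alpha>\<in>A - {\<beta>}. 0 \<le> \<nu> \<alpha>" unfolding Nbeta_def by auto
  with False assms(2,4) have "\<nu> \<alpha> \<le> (\<Sum>\<alpha>\<in>A - {\<beta>}. \<nu> \<alpha>)"
    by (intro member_le_sum) auto
  also have "\<dots> = 1" using Nbeta_eq_neg_sum[OF \<nu>(1) assms(2,3)] \<nu>(2) by simp
  finally show ?thesis using nonneg False assms(4) by auto
qed (use assms(1) in \<open>simp add: Nbeta_dom_def\<close>)

lemma Nbeta_dom_sum_squares_le: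
  assumes "\<mu> \<in> Nbeta_dom X A \<beta>" "finite A" "\<beta> \<in> A"
  shows "(\<Sum>\<alpha>\<in>A. (\<mu> \<alpha>)\<^sup>2) \<le> card A"
proof -
  have "(\<mu> \<alpha>)\<^sup>2 \<le> 1" if "\<alpha> \<in> A" for \<alpha>
    using Nbeta_dom_bound[OF assms that] by (simp add: abs_square_le_1)
  then have "(\<Sum>\<alpha>\<in>A. (\<mu> \<alpha>)\<^sup>2) \<le> (\<Sum>\<alpha>\<in>A. 1)" by (rule sum_mono)
  then show ?thesis by simp
qed

lemma phi_at_bdd_below:
  assumes "X \<noteq> {}" "finite A" "\<beta> \<in> A"
  shows "bdd_below (phi_at X A y ` Nbeta_dom X A \<beta>)"
proof -
  obtain x where x: "x \<in> X" using assms(1) by auto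
  have "- (\<Sum>\<alpha>\<in>A. \<bar>y \<alpha>\<bar>) - (\<Sum>\<alpha>\<in>A. \<bar>\<alpha> \<bullet> x\<bar>) \<le> phi_at X A y \<mu>"
    if \<mu>: "\<mu> \<in> Nbeta_dom X A \<beta>" for \<mu>
  proof -
    have bound: "\<bar>\<mu> \<alpha>\<bar> \<le> 1" if "\<alpha> \<in> A" for \<alpha>
      using Nbeta_dom_bound[OF \<mu> assms(2,3) that] .
    have "- \<bar>y \<alpha>\<bar> \<le> y \<alpha> * \<mu> \<alpha>" "\<mu> \<alpha> * (\<alpha> \<bullet> x) \<le> \<bar>\<alpha> \<bullet> x\<bar>" if "\<alpha> \<in> A" for \<alpha>
    proof -
      have "\<bar>y \<alpha> * \<mu> \<alpha>\<bar> \<le> \<bar>y \<alpha>\<bar>" "\<bar>\<mu> \<alpha> * (\<alpha> \<bullet> x)\<bar> \<le> \<bar>\<alpha> \<bullet> x\<bar>"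
        using bound[OF that] by (auto simp: abs_mult intro: mult_right_le_one_le mult_left_le_one_le)
      then show "- \<bar>y \<alpha>\<bar> \<le> y \<alpha> * \<mu> \<alpha>" "\<mu> \<alpha> * (\<alpha> \<bullet> x) \<le> \<bar>\<alpha> \<bullet> x\<bar>"
        by (smt (verit) abs_ge_self abs_ge_minus_self)+
    qed
    then have "- (\<Sum>\<alpha>\<in>A. \<bar>y \<alpha>\<bar>) \<le> (\<Sum>\<alpha>\<in>A. y \<alpha> * \<mu> \<alpha>)"
      and "(\<Sum>\<alpha>\<in>A. \<mu> \<alpha> * (\<alpha> \<bullet> x)) \<le> (\<Sum>\<alpha>\<in>A. \<bar>\<alpha> \<bullet> x\<bar>)"
      by (auto simp: sum_negf[symmetric] intro: sum_mono)
    moreover have "- (\<Sum>\<alpha>\<in>A. \<mu> \<alpha> * (\<alpha> \<bullet> x)) \<le> real_of_ereal (sigmaA X A \<mu>)"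
      using \<mu> by (intro sigmaA_ge_real[OF assms(1) x]) (simp add: Nbeta_dom_def)
    ultimately show ?thesis unfolding phi_at_def by linarith
  qed
  then show ?thesis by (intro bdd_belowI2)
qed

lemma Nbeta_dom_convergent_subseq:
  fixes g :: "nat \<Rightarrow> 'a::euclidean_space \<Rightarrow> real"
  assumes "finite A" "\<beta> \<in> A" "\<And>n. g n \<in> Nbeta_dom X A \<beta>"
  shows "\<exists>r L. strict_mono r \<and> (\<forall>\<alpha>\<in>A. (\<lambda>n. g (r n) \<alpha>) \<longlonglongrightarrow> L \<alpha>)"
proof (rule finite_coords_convergent_subseq[OF assms(1), of g])
  fix \<alpha> assume "\<alpha> \<in> A"
  then show "Bseq (\<lambda>n. g n \<alpha>)"
    using Nbeta_dom_bound[OF assms(3) assms(1,2)] by (intro BseqI'[of _ 1]) auto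
qed

lemma Nbeta_dom_sublevel_limit:
  assumes X: "X \<noteq> {}" and "finite A" "\<beta> \<in> A"
    and g: "\<And>n. g n \<in> Nbeta_dom X A \<beta>" and le: "\<And>n. phi_at X A y (g n) \<le> m + e n"
    and e: "e \<longlonglongrightarrow> 0" and L: "\<forall>\<alpha>\<in>A. (\<lambda>n. g n \<alpha>) \<longlonglongrightarrow> L \<alpha>"
  shows "(\<lambda>\<alpha>. if \<alpha> \<in> A then L \<alpha> else 0) \<in> Nbeta_dom X A \<beta>"
    and "phi_at X A y (\<lambda>\<alpha>. if \<alpha> \<in> A then L \<alpha> else 0) \<le> m"
proof -
  define \<nu> where "\<nu> = (\<lambda>\<alpha>. if \<alpha> \<in> A then L \<alpha> else 0)"
  have g\<beta>: "g n \<in> Nbeta A \<beta>" "g n \<beta> = -1" for n using g[of n] unfolding Nbeta_dom_def by auto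
  have \<nu>_lim: "(\<lambda>n. g n \<alpha>) \<longlonglongrightarrow> \<nu> \<alpha>" if "\<alpha> \<in> A" for \<alpha>
    using L that unfolding \<nu>_def by simp
  have "\<nu> \<beta> = -1"
    using LIMSEQ_unique[OF \<nu>_lim[OF \<open>\<beta> \<in> A\<close>]] g\<beta>(2) by simp
  moreover have "0 \<le> \<nu> \<alpha>" if "\<alpha> \<in> A" "\<alpha> \<noteq> \<beta>" for \<alpha>
    using \<nu>_lim[OF that(1)] by (rule LIMSEQ_le_const) (use g\<beta>(1) that in \<open>auto simp: Nbeta_def\<close>)
  moreover have "(\<Sum>\<alpha>\<in>A. \<nu> \<alpha>) = 0"
  proof -
    have "(\<lambda>n. \<Sum>\<alpha>\<in>A. g n \<alpha>) \<longlonglongrightarrow> (\<Sum>\<alpha>\<in>A. \<nu> \<alpha>)" by (intro tendsto_sum \<nu>_lim)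
    moreover have "(\<lambda>n. \<Sum>\<alpha>\<in>A. g n \<alpha>) = (\<lambda>n. 0)" using g\<beta>(1) by (simp add: Nbeta_def)
    ultimately show ?thesis by (simp add: LIMSEQ_const_iff)
  qed
  ultimately have \<nu>_Nbeta: "\<nu> \<in> Nbeta A \<beta>" unfolding Nbeta_def RA_def \<nu>_def by auto
  have "- (\<Sum>\<alpha>\<in>A. \<nu> \<alpha> * (\<alpha> \<bullet> x)) \<le> m - (\<Sum>\<alpha>\<in>A. y \<alpha> * \<nu> \<alpha>)" if x: "x \<in> X" for x
  proof -
    have bound: "(\<Sum>\<alpha>\<in>A. y \<alpha> * g n \<alpha>) - (\<Sum>\<alpha>\<in>A. g n \<alpha> * (\<alpha> \<bullet> x)) \<le> m + e n" for n
    proof -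
      have "- (\<Sum>\<alpha>\<in>A. g n \<alpha> * (\<alpha> \<bullet> x)) \<le> real_of_ereal (sigmaA X A (g n))"
        using g[of n] by (intro sigmaA_ge_real[OF X x]) (simp add: Nbeta_dom_def)
      with le[of n] show ?thesis unfolding phi_at_def by simp
    qed
    have "(\<lambda>n. (\<Sum>\<alpha>\<in>A. y \<alpha> * g n \<alpha>) - (\<Sum>\<alpha>\<in>A. g n \<alpha> * (\<alpha> \<bullet> x)))
        \<longlonglongrightarrow> (\<Sum>\<alpha>\<in>A. y \<alpha> * \<nu> \<alpha>) - (\<Sum>\<alpha>\<in>A. \<nu> \<alpha> * (\<alpha> \<bullet> x))"
      by (intro tendsto_intros tendsto_sum \<nu>_lim)
    moreover have "(\<lambda>n. m + e n) \<longlonglongrightarrow> m + 0" by (intro tendsto_intros e)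
    ultimately have "(\<Sum>\<alpha>\<in>A. y \<alpha> * \<nu> \<alpha>) - (\<Sum>\<alpha>\<in>A. \<nu> \<alpha> * (\<alpha> \<bullet> x)) \<le> m + 0"
      by (rule LIMSEQ_le) (use bound in blast)
    then show ?thesis by simp
  qed
  then have \<sigma>_le: "sigmaA X A \<nu> \<le> ereal (m - (\<Sum>\<alpha>\<in>A. y \<alpha> * \<nu> \<alpha>))" by (rule sigmaA_le)
  then have "sigmaA X A \<nu> < \<infinity>" using order.strict_trans1 by fastforce
  with \<nu>_Nbeta \<open>\<nu> \<beta> = -1\<close> show "\<nu> \<in> Nbeta_dom X A \<beta>" unfolding Nbeta_dom_def by simp
  have "real_of_ereal (sigmaA X A \<nu>) \<le> m - (\<Sum>\<alpha>\<in>A. y \<alpha> * \<nu> \<alpha>)"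
    using \<sigma>_le by (subst (asm) sigmaA_real[OF X \<open>sigmaA X A \<nu> < \<infinity>\<close>]) simp
  then show "phi_at X A y \<nu> \<le> m" unfolding phi_at_def by simp
qed

lemma phi_at_attains_inf:
  assumes X: "X \<noteq> {}" and "finite A" "\<beta> \<in> A" and ne: "Nbeta_dom X A \<beta> \<noteq> {}"
  shows "\<exists>e\<in>Nbeta_dom X A \<beta>. \<forall>\<mu>\<in>Nbeta_dom X A \<beta>. phi_at X A y e \<le> phi_at X A y \<mu>"
proof -
  define m where "m = Inf (phi_at X A y ` Nbeta_dom X A \<beta>)"
  have bdd: "bdd_below (phi_at X A y ` Nbeta_dom X A \<beta>)"
    by (rule phi_at_bdd_below[OF X \<open>finite A\<close> \<open>\<beta> \<in> A\<close>])
  obtain g where g: "\<And>n. g n \<in> Nbeta_dom X A \<beta>" and lim: "(\<lambda>n. phi_at X A y (g n)) \<longlonglongrightarrow> m"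
    by (rule minimizing_sequence[OF ne bdd, folded m_def]) blast
  obtain r L where r: "strict_mono r" and L: "\<forall>\<alpha>\<in>A. (\<lambda>n. g (r n) \<alpha>) \<longlonglongrightarrow> L \<alpha>"
    using Nbeta_dom_convergent_subseq[where g = g] \<open>finite A\<close> \<open>\<beta> \<in> A\<close> g by blast
  have "(\<lambda>n. phi_at X A y (g (r n)) - m) \<longlonglongrightarrow> m - m"
    using LIMSEQ_subseq_LIMSEQ[OF lim r] by (intro tendsto_intros) (simp add: o_def)
  then have e: "(\<lambda>n. phi_at X A y (g (r n)) - m) \<longlonglongrightarrow> 0" by simp
  have "(\<lambda>\<alpha>. if \<alpha> \<in> A then L \<alpha> else 0) \<in> Nbeta_dom X A \<beta>"
    "phi_at X A y (\<lambda>\<alpha>. if \<alpha> \<in> A then L \<alpha> else 0) \<le> m"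
    using Nbeta_dom_sublevel_limit[where e = "\<lambda>n. phi_at X A y (g (r n)) - m" and y = y and m = m,
      OF X assms(2,3) g _ e L]
    by simp_all
  moreover have "m \<le> phi_at X A y \<mu>" if "\<mu> \<in> Nbeta_dom X A \<beta>" for \<mu>
    unfolding m_def using that bdd by (simp add: cInf_lower)
  ultimately show ?thesis
    by (intro bexI[of _ "\<lambda>\<alpha>. if \<alpha> \<in> A then L \<alpha> else 0"] ballI) (auto intro: order.trans)
qed

lemma not_proportional_nonzero:
  assumes "\<not> proportional u v"
  shows "u \<noteq> (\<lambda>_. 0)" "v \<noteq> (\<lambda>_. 0)"
proof -
  have "u \<noteq> (\<lambda>\<alpha>. 0 * v \<alpha>)" "v \<noteq> (\<lambda>\<alpha>. 0 * u \<alpha>)"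
    using assms unfolding proportional_def by blast+
  then show "u \<noteq> (\<lambda>_. 0)" "v \<noteq> (\<lambda>_. 0)" by simp_all
qed

lemma affine_decomposition_normalize:
  assumes X: "X \<noteq> {}" and "finite A" "\<beta> \<in> A"
    and \<nu>: "\<nu>\<^sub>1 \<in> Nbeta A \<beta>" "\<nu>\<^sub>2 \<in> Nbeta A \<beta>" "\<not> proportional \<nu>\<^sub>1 \<nu>\<^sub>2"
    and affine: "affine_on_segment X A \<nu>\<^sub>1 \<nu>\<^sub>2"
    and \<theta>: "0 < \<theta>" "\<theta> < 1" and e: "e = (\<lambda>\<alpha>. \<theta> * \<nu>\<^sub>1 \<alpha> + (1 - \<theta>) * \<nu>\<^sub>2 \<alpha>)" "e \<beta> = -1"
  obtains \<kappa> \<mu>\<^sub>1 \<mu>\<^sub>2 where "0 < \<kappa>" "\<kappa> < 1" "\<mu>\<^sub>1 \<in> Nbeta_dom X A \<beta>" "\<mu>\<^sub>2 \<in> Nbeta_dom X A \<beta>"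
    "\<exists>\<alpha>\<in>A. \<mu>\<^sub>1 \<alpha> \<noteq> \<mu>\<^sub>2 \<alpha>" "e = (\<lambda>\<alpha>. \<kappa> * \<mu>\<^sub>1 \<alpha> + (1 - \<kappa>) * \<mu>\<^sub>2 \<alpha>)"
    "phi_at X A y e = \<kappa> * phi_at X A y \<mu>\<^sub>1 + (1 - \<kappa>) * phi_at X A y \<mu>\<^sub>2"
proof -
  have neg1: "\<nu>\<^sub>1 \<beta> < 0" and neg2: "\<nu>\<^sub>2 \<beta> < 0"
    using Nbeta_neg[OF \<nu>(1) \<open>finite A\<close> \<open>\<beta> \<in> A\<close>] Nbeta_neg[OF \<nu>(2) \<open>finite A\<close> \<open>\<beta> \<in> A\<close>]
      not_proportional_nonzero[OF \<nu>(3)] by auto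
  have fin: "sigmaA X A \<nu>\<^sub>1 < \<infinity>" "sigmaA X A \<nu>\<^sub>2 < \<infinity>"
    using affine_on_segment_phi_at(1,2)[OF X affine, of \<theta>] \<theta> by simp_all
  define s\<^sub>1 s\<^sub>2 where "s\<^sub>1 = - \<nu>\<^sub>1 \<beta>" and "s\<^sub>2 = - \<nu>\<^sub>2 \<beta>"
  define \<mu>\<^sub>1 \<mu>\<^sub>2 where "\<mu>\<^sub>1 = (\<lambda>\<alpha>. (1 / s\<^sub>1) * \<nu>\<^sub>1 \<alpha>)" and "\<mu>\<^sub>2 = (\<lambda>\<alpha>. (1 / s\<^sub>2) * \<nu>\<^sub>2 \<alpha>)"
  have s: "0 < s\<^sub>1" "0 < s\<^sub>2" using neg1 neg2 unfolding s\<^sub>1_def s\<^sub>2_def by auto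
  have \<mu>_dom: "\<mu>\<^sub>1 \<in> Nbeta_dom X A \<beta>" "\<mu>\<^sub>2 \<in> Nbeta_dom X A \<beta>"
    unfolding \<mu>\<^sub>1_def \<mu>\<^sub>2_def s\<^sub>1_def s\<^sub>2_def
    by (rule Nbeta_dom_normalize[OF X \<nu>(1) neg1 fin(1)], rule Nbeta_dom_normalize[OF X \<nu>(2) neg2 fin(2)])
  have \<nu>_eq: "\<nu>\<^sub>1 = (\<lambda>\<alpha>. s\<^sub>1 * \<mu>\<^sub>1 \<alpha>)" "\<nu>\<^sub>2 = (\<lambda>\<alpha>. s\<^sub>2 * \<mu>\<^sub>2 \<alpha>)"
    unfolding \<mu>\<^sub>1_def \<mu>\<^sub>2_def using s by auto
  define \<kappa> where "\<kappa> = \<theta> * s\<^sub>1"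
  have \<kappa>: "1 - \<kappa> = (1 - \<theta>) * s\<^sub>2"
    using e unfolding \<kappa>_def s\<^sub>1_def s\<^sub>2_def by (simp add: algebra_simps)
  show thesis
  proof (rule that[of \<kappa> \<mu>\<^sub>1 \<mu>\<^sub>2])
    show "0 < \<kappa>" using \<theta>(1) s(1) unfolding \<kappa>_def by simp
    have "0 < (1 - \<theta>) * s\<^sub>2" using \<theta>(2) s(2) by simp
    with \<kappa> show "\<kappa> < 1" by linarith
    show "\<mu>\<^sub>1 \<in> Nbeta_dom X A \<beta>" "\<mu>\<^sub>2 \<in> Nbeta_dom X A \<beta>" by (fact \<mu>_dom)+
    show "e = (\<lambda>\<alpha>. \<kappa> * \<mu>\<^sub>1 \<alpha> + (1 - \<kappa>) * \<mu>\<^sub>2 \<alpha>)"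
      unfolding \<kappa> unfolding e(1) \<kappa>_def by (simp only: \<nu>_eq) (simp add: mult.assoc)
    have "phi_at X A y e = \<theta> * phi_at X A y \<nu>\<^sub>1 + (1 - \<theta>) * phi_at X A y \<nu>\<^sub>2"
      unfolding e(1) using affine_on_segment_phi_at(3)[OF X affine] \<theta> by simp
    also have "\<dots> = \<kappa> * phi_at X A y \<mu>\<^sub>1 + (1 - \<kappa>) * phi_at X A y \<mu>\<^sub>2"
      unfolding \<kappa> using s by (simp only: \<nu>_eq phi_at_scale[OF X less_imp_le]) (simp add: \<kappa>_def)
    finally show "phi_at X A y e = \<kappa> * phi_at X A y \<mu>\<^sub>1 + (1 - \<kappa>) * phi_at X A y \<mu>\<^sub>2" .
    show "\<exists>\<alpha>\<in>A. \<mu>\<^sub>1 \<alpha> \<noteq> \<mu>\<^sub>2 \<alpha>"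
    proof (rule ccontr)
      assume "\<not> (\<exists>\<alpha>\<in>A. \<mu>\<^sub>1 \<alpha> \<noteq> \<mu>\<^sub>2 \<alpha>)"
      then have "\<nu>\<^sub>1 \<alpha> = (s\<^sub>1 / s\<^sub>2) * \<nu>\<^sub>2 \<alpha>" for \<alpha>
        using \<nu>(1,2) s unfolding \<mu>\<^sub>1_def \<mu>\<^sub>2_def Nbeta_def RA_def
        by (cases "\<alpha> \<in> A") (auto simp: field_simps)
      then have "\<nu>\<^sub>1 = (\<lambda>\<alpha>. (s\<^sub>1 / s\<^sub>2) * \<nu>\<^sub>2 \<alpha>)" ..
      with \<nu>(3) show False unfolding proportional_def by blast
    qed
  qed
qed

lemma minimizer_of_max_norm_is_circuit:
  assumes X: "X \<noteq> {}" and "finite A" "\<beta> \<in> A" and e: "e \<in> Nbeta_dom X A \<beta>"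
    and min: "\<forall>\<mu>\<in>Nbeta_dom X A \<beta>. phi_at X A y e \<le> phi_at X A y \<mu>"
    and max: "\<forall>\<mu>\<in>Nbeta_dom X A \<beta>. phi_at X A y \<mu> \<le> phi_at X A y e \<longrightarrow>
                (\<Sum>\<alpha>\<in>A. (\<mu> \<alpha>)\<^sup>2) \<le> (\<Sum>\<alpha>\<in>A. (e \<alpha>)\<^sup>2)"
  shows "X_circuit X A \<beta> e"
  unfolding X_circuit_def
proof (intro conjI notI)
  show "e \<in> Nbeta A \<beta>" "supp_fun X (- Amul A e) < \<infinity>"
    using e unfolding Nbeta_dom_def sigmaA_def by auto
  show "e = (\<lambda>_. 0) \<Longrightarrow> False" using e unfolding Nbeta_dom_def by auto
  assume "\<exists>\<nu>\<^sub>1\<in>Nbeta A \<beta>. \<exists>\<nu>\<^sub>2\<in>Nbeta A \<beta>. \<exists>\<theta>. 0 < \<theta> \<and> \<theta> < 1 \<and>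
            e = (\<lambda>\<alpha>. \<theta> * \<nu>\<^sub>1 \<alpha> + (1 - \<theta>) * \<nu>\<^sub>2 \<alpha>) \<and> \<not> proportional \<nu>\<^sub>1 \<nu>\<^sub>2 \<and> affine_on_segment X A \<nu>\<^sub>1 \<nu>\<^sub>2"
  then obtain \<nu>\<^sub>1 \<nu>\<^sub>2 \<theta> where "\<nu>\<^sub>1 \<in> Nbeta A \<beta>" "\<nu>\<^sub>2 \<in> Nbeta A \<beta>" "0 < \<theta>" "\<theta> < 1"
      "e = (\<lambda>\<alpha>. \<theta> * \<nu>\<^sub>1 \<alpha> + (1 - \<theta>) * \<nu>\<^sub>2 \<alpha>)" "\<not> proportional \<nu>\<^sub>1 \<nu>\<^sub>2" "affine_on_segment X A \<nu>\<^sub>1 \<nu>\<^sub>2"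
    by blast
  moreover have "e \<beta> = -1" using e unfolding Nbeta_dom_def by simp
  ultimately obtain \<kappa> \<mu>\<^sub>1 \<mu>\<^sub>2 where \<kappa>: "0 < \<kappa>" "\<kappa> < 1"
    and \<mu>: "\<mu>\<^sub>1 \<in> Nbeta_dom X A \<beta>" "\<mu>\<^sub>2 \<in> Nbeta_dom X A \<beta>" and differ: "\<exists>\<alpha>\<in>A. \<mu>\<^sub>1 \<alpha> \<noteq> \<mu>\<^sub>2 \<alpha>"
    and e_eq: "e = (\<lambda>\<alpha>. \<kappa> * \<mu>\<^sub>1 \<alpha> + (1 - \<kappa>) * \<mu>\<^sub>2 \<alpha>)"
    and phi_eq: "phi_at X A y e = \<kappa> * phi_at X A y \<mu>\<^sub>1 + (1 - \<kappa>) * phi_at X A y \<mu>\<^sub>2"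
    using affine_decomposition_normalize[OF X \<open>finite A\<close> \<open>\<beta> \<in> A\<close>, where y = y] by blast
  define Q where "Q \<mu> = (\<Sum>\<alpha>\<in>A. (\<mu> \<alpha>)\<^sup>2)" for \<mu> :: "'a \<Rightarrow> real"
  \<comment> \<open>both pieces are minimizers as well, and by strict convexity of \<open>Q\<close> one of them is longer than \<open>e\<close>\<close>
  have "phi_at X A y e \<le> phi_at X A y \<mu>\<^sub>1" "phi_at X A y e \<le> phi_at X A y \<mu>\<^sub>2"
    using min \<mu> by auto
  moreover have "\<kappa> * (phi_at X A y \<mu>\<^sub>1 - phi_at X A y e) + (1 - \<kappa>) * (phi_at X A y \<mu>\<^sub>2 - phi_at X A y e) = 0"
    using phi_eq by (simp add: algebra_simps)
  ultimately have "phi_at X A y \<mu>\<^sub>1 = phi_at X A y e" "phi_at X A y \<mu>\<^sub>2 = phi_at X A y e"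
    using \<kappa> by (simp_all add: add_nonneg_eq_0_iff)
  then have "Q \<mu>\<^sub>1 \<le> Q e" "Q \<mu>\<^sub>2 \<le> Q e"
    using max \<mu> unfolding Q_def by simp_all
  then have "\<kappa> * Q \<mu>\<^sub>1 + (1 - \<kappa>) * Q \<mu>\<^sub>2 \<le> \<kappa> * Q e + (1 - \<kappa>) * Q e"
    using \<kappa> by (intro add_mono mult_left_mono) simp_all
  moreover obtain \<alpha>\<^sub>0 where "\<alpha>\<^sub>0 \<in> A" "\<mu>\<^sub>1 \<alpha>\<^sub>0 \<noteq> \<mu>\<^sub>2 \<alpha>\<^sub>0" using differ by blast
  then have "Q e < \<kappa> * Q \<mu>\<^sub>1 + (1 - \<kappa>) * Q \<mu>\<^sub>2"
    unfolding Q_def e_eq using sum_squares_strictly_convex[where u = \<mu>\<^sub>1 and v = \<mu>\<^sub>2] \<open>finite A\<close> \<kappa>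
    by simp
  ultimately show False by (simp add: algebra_simps)
qed

lemma exists_circuit_minimizer:
  assumes X: "X \<noteq> {}" and "finite A" "\<beta> \<in> A" and ne: "Nbeta_dom X A \<beta> \<noteq> {}"
  shows "\<exists>e\<in>Nbeta_dom X A \<beta>. X_circuit X A \<beta> e \<and> (\<forall>\<mu>\<in>Nbeta_dom X A \<beta>. phi_at X A y e \<le> phi_at X A y \<mu>)"
proof -
  obtain e\<^sub>1 where e\<^sub>1: "e\<^sub>1 \<in> Nbeta_dom X A \<beta>" and min: "\<forall>\<mu>\<in>Nbeta_dom X A \<beta>. phi_at X A y e\<^sub>1 \<le> phi_at X A y \<mu>"
    using phi_at_attains_inf[OF X \<open>finite A\<close> \<open>\<beta> \<in> A\<close> ne] by blast
  define m where "m = phi_at X A y e\<^sub>1"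
  define F where "F = {\<mu> \<in> Nbeta_dom X A \<beta>. phi_at X A y \<mu> \<le> m}"
  \<comment> \<open>minimizing \<open>f\<close> over the minimizers \<open>F\<close> picks one of maximal norm\<close>
  define f where "f \<mu> = - (\<Sum>\<alpha>\<in>A. (\<mu> \<alpha>)\<^sup>2)" for \<mu> :: "'a \<Rightarrow> real"
  have "F \<noteq> {}" using e\<^sub>1 unfolding F_def m_def by auto
  have "- real (card A) \<le> f \<mu>" if "\<mu> \<in> F" for \<mu>
  proof -
    from that have "\<mu> \<in> Nbeta_dom X A \<beta>" unfolding F_def by simp
    from Nbeta_dom_sum_squares_le[OF this \<open>finite A\<close> \<open>\<beta> \<in> A\<close>] show ?thesis unfolding f_def by simp
  qed
  then have bdd: "bdd_below (f ` F)" by (intro bdd_belowI2)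
  define M where "M = Inf (f ` F)"
  obtain h where h: "\<And>n. h n \<in> F" and lim: "(\<lambda>n. f (h n)) \<longlonglongrightarrow> M"
    by (rule minimizing_sequence[OF \<open>F \<noteq> {}\<close> bdd, folded M_def]) blast
  have h_dom: "\<And>n. h n \<in> Nbeta_dom X A \<beta>" and h_le: "\<And>n. phi_at X A y (h n) \<le> m + 0"
    using h unfolding F_def by auto
  obtain r L where r: "strict_mono r" and L: "\<forall>\<alpha>\<in>A. (\<lambda>n. h (r n) \<alpha>) \<longlonglongrightarrow> L \<alpha>"
    using Nbeta_dom_convergent_subseq[where g = h] \<open>finite A\<close> \<open>\<beta> \<in> A\<close> h_dom by blast
  define e where "e = (\<lambda>\<alpha>. if \<alpha> \<in> A then L \<alpha> else 0)"
  have e: "e \<in> Nbeta_dom X A \<beta>" "phi_at X A y e \<le> m"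
    unfolding e_def using Nbeta_dom_sublevel_limit[OF X \<open>finite A\<close> \<open>\<beta> \<in> A\<close> h_dom h_le tendsto_const L]
    by simp_all
  have "(\<lambda>n. f (h (r n))) \<longlonglongrightarrow> f e"
    unfolding f_def e_def using L by (auto intro!: tendsto_intros tendsto_sum)
  moreover have "(\<lambda>n. f (h (r n))) \<longlonglongrightarrow> M"
    using LIMSEQ_subseq_LIMSEQ[OF lim r] by (simp add: o_def)
  ultimately have "f e = M" by (rule LIMSEQ_unique)
  then have max: "f e \<le> f \<mu>" if "\<mu> \<in> F" for \<mu>
    unfolding M_def using that bdd by (simp add: cInf_lower)
  have e_min: "\<forall>\<mu>\<in>Nbeta_dom X A \<beta>. phi_at X A y e \<le> phi_at X A y \<mu>"
    using e(2) min unfolding m_def by (auto intro: order.trans)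
  have "X_circuit X A \<beta> e"
  proof (rule minimizer_of_max_norm_is_circuit[OF X \<open>finite A\<close> \<open>\<beta> \<in> A\<close> e(1) e_min], intro ballI impI)
    fix \<mu> assume "\<mu> \<in> Nbeta_dom X A \<beta>" "phi_at X A y \<mu> \<le> phi_at X A y e"
    with e(2) have "\<mu> \<in> F" unfolding F_def by simp
    from max[OF this] show "(\<Sum>\<alpha>\<in>A. (\<mu> \<alpha>)\<^sup>2) \<le> (\<Sum>\<alpha>\<in>A. (e \<alpha>)\<^sup>2)" unfolding f_def by simp
  qed
  with e(1) e_min show ?thesis by blast
qed

lemma Nbeta_phi_nonneg_if_circuits:
  assumes X: "X \<noteq> {}" and "finite A" "\<beta> \<in> A"
    and circuits: "\<And>l. X_circuit X A \<beta> l \<Longrightarrow> l \<beta> = -1 \<Longrightarrow> 0 \<le> phi_at X A y l"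
    and \<nu>: "\<nu> \<in> Nbeta A \<beta>"
  shows "0 \<le> ereal (\<Sum>\<alpha>\<in>A. y \<alpha> * \<nu> \<alpha>) + sigmaA X A \<nu>"
proof (rule ccontr)
  assume neg: "\<not> 0 \<le> ereal (\<Sum>\<alpha>\<in>A. y \<alpha> * \<nu> \<alpha>) + sigmaA X A \<nu>"
  then have fin: "sigmaA X A \<nu> < \<infinity>" by auto
  have "ereal (\<Sum>\<alpha>\<in>A. y \<alpha> * \<nu> \<alpha>) + sigmaA X A \<nu> = ereal (phi_at X A y \<nu>)"
    unfolding phi_at_def by (subst sigmaA_real[OF X fin]) simp
  with neg have "phi_at X A y \<nu> < 0" by simp
  have "\<nu> \<noteq> (\<lambda>_. 0)"
  proof
    assume "\<nu> = (\<lambda>_. 0)"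
    with neg sigmaA_zero[OF X] show False by simp
  qed
  with \<nu> \<open>finite A\<close> \<open>\<beta> \<in> A\<close> have "\<nu> \<beta> < 0" by (rule Nbeta_neg)
  define \<nu>' where "\<nu>' = (\<lambda>\<alpha>. (1 / - \<nu> \<beta>) * \<nu> \<alpha>)"
  have \<nu>'_dom: "\<nu>' \<in> Nbeta_dom X A \<beta>"
    unfolding \<nu>'_def using Nbeta_dom_normalize[OF X \<nu> \<open>\<nu> \<beta> < 0\<close> fin] .
  have "phi_at X A y \<nu>' < 0"
    unfolding \<nu>'_def using phi_at_scale[OF X, of "1 / - \<nu> \<beta>"] \<open>\<nu> \<beta> < 0\<close> \<open>phi_at X A y \<nu> < 0\<close>
    by (simp add: divide_neg_neg)
  obtain e where "e \<in> Nbeta_dom X A \<beta>" "X_circuit X A \<beta> e" "phi_at X A y e \<le> phi_at X A y \<nu>'"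
    using exists_circuit_minimizer[OF X \<open>finite A\<close> \<open>\<beta> \<in> A\<close>, of y] \<nu>'_dom by blast
  moreover have "0 \<le> phi_at X A y e"
    using circuits calculation(1,2) unfolding Nbeta_dom_def by simp
  ultimately show False using \<open>phi_at X A y \<nu>' < 0\<close> by simp
qed

section \<open>Duality for the AGE cones\<close>

lemma SAGE_beta_subset_SAGE:
  assumes "finite A" "\<beta> \<in> A"
  shows "SAGE_beta X A \<beta> \<subseteq> SAGE X A"
proof
  fix c assume c: "c \<in> SAGE_beta X A \<beta>"
  define f where "f \<gamma> = (if \<gamma> = \<beta> then c else (\<lambda>_. 0))" for \<gamma>
  have "f \<gamma> \<in> SAGE_beta X A \<gamma>" for \<gamma>
    using c unfolding f_def SAGE_beta_def RA_def signomial_def by auto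
  moreover have "(\<Sum>\<gamma>\<in>A. f \<gamma> \<alpha>) = c \<alpha>" for \<alpha>
  proof -
    have "(\<Sum>\<gamma>\<in>A. f \<gamma> \<alpha>) = (\<Sum>\<gamma>\<in>A. if \<gamma> = \<beta> then c \<alpha> else 0)"
      by (rule sum.cong) (auto simp: f_def)
    then show ?thesis using assms by simp
  qed
  ultimately show "c \<in> SAGE X A"
    unfolding SAGE_def by (intro CollectI exI[of _ f]) auto
qed

lemma SAGE_nonneg:
  assumes "c \<in> SAGE X A" "x \<in> X"
  shows "0 \<le> signomial A c x"
proof -
  obtain f where f: "\<forall>\<beta>\<in>A. f \<beta> \<in> SAGE_beta X A \<beta>" and c: "c = (\<lambda>\<alpha>. \<Sum>\<beta>\<in>A. f \<beta> \<alpha>)"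
    using assms(1) unfolding SAGE_def by auto
  have "signomial A c x = (\<Sum>\<alpha>\<in>A. \<Sum>\<beta>\<in>A. f \<beta> \<alpha> * exp (\<alpha> \<bullet> x))"
    unfolding c signomial_def by (simp add: sum_distrib_right)
  also have "\<dots> = (\<Sum>\<beta>\<in>A. signomial A (f \<beta>) x)"
    unfolding signomial_def by (rule sum.swap)
  also have "0 \<le> \<dots>"
    using f assms(2) unfolding SAGE_beta_def by (auto intro: sum_nonneg)
  finally show ?thesis .
qed

lemma SAGE_dual_closed: "closed (SAGE_dual X A)"
proof -
  have "SAGE_dual X A = (\<Inter>\<alpha>\<in>-A. {v. v \<alpha> = 0}) \<inter> (\<Inter>c\<in>SAGE X A. {v. 0 \<le> (\<Sum>\<alpha>\<in>A. v \<alpha> * c \<alpha>)})"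
    unfolding SAGE_dual_def RA_def by auto
  moreover have "closed {v::'a \<Rightarrow> real. v \<alpha> = 0}" for \<alpha>
    by (intro closed_Collect_eq continuous_intros continuous_on_product_coordinates)
  moreover have "closed {v::'a \<Rightarrow> real. 0 \<le> (\<Sum>\<alpha>\<in>A. v \<alpha> * c \<alpha>)}" for c
    by (intro closed_Collect_le continuous_intros continuous_on_product_coordinates)
  ultimately show ?thesis by (simp add: closed_Int closed_INT)
qed

lemma SAGE_dual_nonneg:
  assumes "v \<in> SAGE_dual X A" "finite A" "\<alpha> \<in> A"
  shows "0 \<le> v \<alpha>"
proof -
  define c :: "'a \<Rightarrow> real" where "c \<gamma> = (if \<gamma> = \<alpha> then 1 else 0)" for \<gamma>
  have "c \<in> SAGE_beta X A \<alpha>"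
    unfolding SAGE_beta_def RA_def signomial_def c_def using assms(2,3) by (auto intro!: sum_nonneg)
  then have "0 \<le> (\<Sum>\<gamma>\<in>A. v \<gamma> * c \<gamma>)"
    using assms SAGE_beta_subset_SAGE unfolding SAGE_dual_def by blast
  also have "(\<Sum>\<gamma>\<in>A. v \<gamma> * c \<gamma>) = (\<Sum>\<gamma>\<in>A. if \<gamma> = \<alpha> then v \<alpha> else 0)"
    by (rule sum.cong) (auto simp: c_def)
  also have "\<dots> = v \<alpha>"
    using assms(2,3) by simp
  finally show ?thesis .
qed

lemma exp_vec_inner_in_SAGE_dual:
  assumes "x \<in> X"
  shows "exp_vec A (\<lambda>\<alpha>. \<alpha> \<bullet> x) \<in> SAGE_dual X A"
  using SAGE_nonneg[OF _ assms]
  unfolding SAGE_dual_def RA_def exp_vec_def signomial_def by (auto simp: mult.commute)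

lemma SAGE_dual_add_scaled:
  assumes "v \<in> SAGE_dual X A" "w \<in> SAGE_dual X A" "0 \<le> t"
  shows "(\<lambda>\<alpha>. v \<alpha> + t * w \<alpha>) \<in> SAGE_dual X A"
proof -
  have "0 \<le> (\<Sum>\<alpha>\<in>A. (v \<alpha> + t * w \<alpha>) * c \<alpha>)" if "c \<in> SAGE X A" for c
  proof -
    have "(\<Sum>\<alpha>\<in>A. (v \<alpha> + t * w \<alpha>) * c \<alpha>) = (\<Sum>\<alpha>\<in>A. v \<alpha> * c \<alpha>) + t * (\<Sum>\<alpha>\<in>A. w \<alpha> * c \<alpha>)"
      by (simp add: algebra_simps sum.distrib sum_distrib_left)
    then show ?thesis using assms that unfolding SAGE_dual_def by simp
  qed
  then show ?thesis using assms unfolding SAGE_dual_def RA_def by simp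
qed

definition exponent_upper_bounds :: "'a::euclidean_space set \<Rightarrow> 'a set \<Rightarrow> 'a \<Rightarrow> ('a \<Rightarrow> real) set" where
  "exponent_upper_bounds X A \<beta> = {s. \<exists>x\<in>X. \<forall>\<alpha>\<in>A - {\<beta>}. (\<alpha> - \<beta>) \<bullet> x \<le> s \<alpha>}"

lemma exponent_upper_bounds_upward:
  "s \<in> exponent_upper_bounds X A \<beta> \<Longrightarrow> 0 \<le> t \<Longrightarrow> s(\<alpha> := s \<alpha> + t) \<in> exponent_upper_bounds X A \<beta>"
  unfolding exponent_upper_bounds_def by (force intro: add_increasing2)

lemma exponent_upper_bounds_convex:
  assumes "convex X" "s \<in> exponent_upper_bounds X A \<beta>" "s' \<in> exponent_upper_bounds X A \<beta>" "0 \<le> t" "t \<le> 1"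
  shows "(\<lambda>\<alpha>. (1 - t) * s \<alpha> + t * s' \<alpha>) \<in> exponent_upper_bounds X A \<beta>"
proof -
  obtain x x' where x: "x \<in> X" "\<forall>\<alpha>\<in>A - {\<beta>}. (\<alpha> - \<beta>) \<bullet> x \<le> s \<alpha>"
    and x': "x' \<in> X" "\<forall>\<alpha>\<in>A - {\<beta>}. (\<alpha> - \<beta>) \<bullet> x' \<le> s' \<alpha>"
    using assms(2,3) unfolding exponent_upper_bounds_def by blast
  have "(1 - t) *\<^sub>R x + t *\<^sub>R x' \<in> X"
    using assms(1,4,5) x(1) x'(1) unfolding convex_def by simp
  moreover have "(\<alpha> - \<beta>) \<bullet> ((1 - t) *\<^sub>R x + t *\<^sub>R x') \<le> (1 - t) * s \<alpha> + t * s' \<alpha>"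
    if "\<alpha> \<in> A - {\<beta>}" for \<alpha>
    using x(2) x'(2) that assms(4,5) by (simp add: inner_add_right add_mono mult_left_mono)
  ultimately show ?thesis unfolding exponent_upper_bounds_def by blast
qed

lemma Nbeta_extend:
  fixes u w :: "'a \<Rightarrow> real"
  assumes "finite A" "\<beta> \<in> A" "\<And>\<alpha>. \<alpha> \<in> A - {\<beta>} \<Longrightarrow> 0 \<le> u \<alpha>"
  defines "\<nu> \<equiv> \<lambda>\<alpha>. if \<alpha> \<in> A - {\<beta>} then u \<alpha> else if \<alpha> = \<beta> then - (\<Sum>\<gamma>\<in>A - {\<beta>}. u \<gamma>) else 0"
  shows "\<nu> \<in> Nbeta A \<beta>" and "(\<Sum>\<alpha>\<in>A. \<nu> \<alpha> * w \<alpha>) = (\<Sum>\<alpha>\<in>A - {\<beta>}. u \<alpha> * (w \<alpha> - w \<beta>))"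
proof -
  have sum_A: "(\<Sum>\<alpha>\<in>A. f \<alpha>) = f \<beta> + (\<Sum>\<alpha>\<in>A - {\<beta>}. f \<alpha>)" for f :: "'a \<Rightarrow> real"
    by (rule sum.remove[OF assms(1,2)])
  have sum_\<nu>: "(\<Sum>\<alpha>\<in>A. \<nu> \<alpha>) = 0"
    unfolding sum_A by (simp add: \<nu>_def)
  then show "\<nu> \<in> Nbeta A \<beta>"
    using assms(2,3) unfolding Nbeta_def RA_def \<nu>_def by auto
  show "(\<Sum>\<alpha>\<in>A. \<nu> \<alpha> * w \<alpha>) = (\<Sum>\<alpha>\<in>A - {\<beta>}. u \<alpha> * (w \<alpha> - w \<beta>))"
    unfolding sum_remove_shift[OF assms(1,2) sum_\<nu>] by (simp add: \<nu>_def)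
qed

lemma Nbeta_dual_approx_point:
  fixes y :: "'a::euclidean_space \<Rightarrow> real"
  assumes X: "X \<noteq> {}" "convex X" and "finite A" "\<beta> \<in> A"
    and dual: "\<And>\<nu>. \<nu> \<in> Nbeta A \<beta> \<Longrightarrow> 0 \<le> ereal (\<Sum>\<alpha>\<in>A. y \<alpha> * \<nu> \<alpha>) + sigmaA X A \<nu>"
    and "0 < \<epsilon>"
  shows "\<exists>x\<in>X. \<forall>\<alpha>\<in>A - {\<beta>}. (\<alpha> - \<beta>) \<bullet> x \<le> y \<alpha> - y \<beta> + \<epsilon>"
proof (rule ccontr)
  assume far_away: "\<not> ?thesis"
  define A' where "A' = A - {\<beta>}"
  define z where "z \<alpha> = y \<alpha> - y \<beta>" for \<alpha>
  define D where "D = exponent_upper_bounds X A \<beta>"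
  have "finite A'" using \<open>finite A\<close> unfolding A'_def by simp
  obtain x\<^sub>0 where "x\<^sub>0 \<in> X" using X by auto
  then have s\<^sub>0: "(\<lambda>\<alpha>. (\<alpha> - \<beta>) \<bullet> x\<^sub>0) \<in> D" unfolding D_def exponent_upper_bounds_def by auto
  have "\<epsilon>\<^sup>2 \<le> (\<Sum>\<alpha>\<in>A'. (s \<alpha> - z \<alpha>)\<^sup>2)" if "s \<in> D" for s
  proof (rule ccontr)
    assume small: "\<not> ?thesis"
    have "\<bar>s \<alpha> - z \<alpha>\<bar> < \<epsilon>" if "\<alpha> \<in> A'" for \<alpha>
      using sum_squares_less_imp_abs_less[where f = "\<lambda>\<alpha>. s \<alpha> - z \<alpha>", OF \<open>finite A'\<close> that] small \<open>0 < \<epsilon>\<close>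
      by simp
    moreover obtain x where "x \<in> X" "\<forall>\<alpha>\<in>A'. (\<alpha> - \<beta>) \<bullet> x \<le> s \<alpha>"
      using \<open>s \<in> D\<close> unfolding D_def exponent_upper_bounds_def A'_def by blast
    ultimately show False
      using far_away unfolding A'_def z_def by (smt (verit, best) DiffI)
  qed
  then obtain \<mu> where sep: "\<And>s. s \<in> D \<Longrightarrow> (\<Sum>\<alpha>\<in>A'. \<mu> \<alpha> * s \<alpha>) + \<epsilon>\<^sup>2 \<le> (\<Sum>\<alpha>\<in>A'. \<mu> \<alpha> * z \<alpha>)"
    using nearest_point_separation[OF \<open>finite A'\<close>, of D] s\<^sub>0 exponent_upper_bounds_convex[OF X(2)]
    unfolding D_def by blast
  have "\<mu> \<alpha> \<le> 0" if "\<alpha> \<in> A'" for \<alpha>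
  proof (rule separating_normal_nonpos[OF \<open>finite A'\<close> s\<^sub>0 _ _ that])
    show "s(i := s i + t) \<in> D" if "s \<in> D" "0 \<le> t" for s i t
      using that unfolding D_def by (rule exponent_upper_bounds_upward)
    show "(\<Sum>\<alpha>\<in>A'. \<mu> \<alpha> * s \<alpha>) \<le> (\<Sum>\<alpha>\<in>A'. \<mu> \<alpha> * z \<alpha>) - \<epsilon>\<^sup>2" if "s \<in> D" for s
      using sep[OF that] by simp
  qed
  then obtain \<nu> where \<nu>: "\<nu> \<in> Nbeta A \<beta>"
    and shift: "\<And>w. (\<Sum>\<alpha>\<in>A. \<nu> \<alpha> * w \<alpha>) = - (\<Sum>\<alpha>\<in>A'. \<mu> \<alpha> * (w \<alpha> - w \<beta>))"
    using Nbeta_extend[OF \<open>finite A\<close> \<open>\<beta> \<in> A\<close>, of "\<lambda>\<alpha>. - \<mu> \<alpha>"]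
    unfolding A'_def by (auto simp: sum_negf)
  have \<sigma>_le: "sigmaA X A \<nu> \<le> ereal ((\<Sum>\<alpha>\<in>A'. \<mu> \<alpha> * z \<alpha>) - \<epsilon>\<^sup>2)"
  proof (rule sigmaA_le)
    fix x assume "x \<in> X"
    then have "(\<lambda>\<alpha>. (\<alpha> - \<beta>) \<bullet> x) \<in> D" unfolding D_def exponent_upper_bounds_def by auto
    from sep[OF this] show "- (\<Sum>\<alpha>\<in>A. \<nu> \<alpha> * (\<alpha> \<bullet> x)) \<le> (\<Sum>\<alpha>\<in>A'. \<mu> \<alpha> * z \<alpha>) - \<epsilon>\<^sup>2"
      unfolding shift by (simp add: inner_diff_left)
  qed
  have "(\<Sum>\<alpha>\<in>A. y \<alpha> * \<nu> \<alpha>) = - (\<Sum>\<alpha>\<in>A'. \<mu> \<alpha> * z \<alpha>)"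
    using shift[of y] unfolding z_def by (simp add: mult.commute)
  then have "ereal (\<Sum>\<alpha>\<in>A. y \<alpha> * \<nu> \<alpha>) + sigmaA X A \<nu> \<le> ereal (- \<epsilon>\<^sup>2)"
    using add_left_mono[OF \<sigma>_le, of "ereal (\<Sum>\<alpha>\<in>A. y \<alpha> * \<nu> \<alpha>)"] by simp
  with dual[OF \<nu>] have "0 \<le> ereal (- \<epsilon>\<^sup>2)" by (rule order.trans)
  with \<open>0 < \<epsilon>\<close> show False by simp
qed

lemma SAGE_beta_dual_nonneg:
  fixes y :: "'a::euclidean_space \<Rightarrow> real"
  assumes X: "X \<noteq> {}" "convex X" and "finite A" "\<beta> \<in> A"
    and dual: "\<And>\<nu>. \<nu> \<in> Nbeta A \<beta> \<Longrightarrow> 0 \<le> ereal (\<Sum>\<alpha>\<in>A. y \<alpha> * \<nu> \<alpha>) + sigmaA X A \<nu>"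
    and d: "d \<in> SAGE_beta X A \<beta>"
  shows "0 \<le> (\<Sum>\<alpha>\<in>A. exp (y \<alpha>) * d \<alpha>)"
proof -
  define S where "S = (\<Sum>\<alpha>\<in>A - {\<beta>}. d \<alpha> * exp (y \<alpha> - y \<beta>))"
  have d_nonneg: "0 \<le> d \<alpha>" if "\<alpha> \<in> A - {\<beta>}" for \<alpha>
    using d that unfolding SAGE_beta_def by auto
  have approx: "0 \<le> d \<beta> + exp \<epsilon> * S" if \<epsilon>: "0 < \<epsilon>" for \<epsilon>
  proof -
    obtain x where x: "x \<in> X" "\<forall>\<alpha>\<in>A - {\<beta>}. (\<alpha> - \<beta>) \<bullet> x \<le> y \<alpha> - y \<beta> + \<epsilon>"
      using Nbeta_dual_approx_point[where y = y, OF X \<open>finite A\<close> \<open>\<beta> \<in> A\<close> dual \<epsilon>] by blast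
    have "0 \<le> signomial A d x" using d x(1) unfolding SAGE_beta_def by blast
    also have "\<dots> = exp (\<beta> \<bullet> x) * (d \<beta> + (\<Sum>\<alpha>\<in>A - {\<beta>}. d \<alpha> * exp ((\<alpha> - \<beta>) \<bullet> x)))"
      unfolding signomial_def sum_exp_factor[OF \<open>finite A\<close> \<open>\<beta> \<in> A\<close>] by (simp add: inner_diff_left)
    finally have "0 \<le> d \<beta> + (\<Sum>\<alpha>\<in>A - {\<beta>}. d \<alpha> * exp ((\<alpha> - \<beta>) \<bullet> x))"
      by (simp add: zero_le_mult_iff)
    also have "\<dots> \<le> d \<beta> + (\<Sum>\<alpha>\<in>A - {\<beta>}. d \<alpha> * exp (y \<alpha> - y \<beta> + \<epsilon>))"
      using x(2) d_nonneg by (intro add_left_mono sum_mono mult_left_mono) auto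
    also have "\<dots> = d \<beta> + exp \<epsilon> * S"
      unfolding S_def by (simp add: exp_add sum_distrib_left mult_ac)
    finally show ?thesis .
  qed
  have "(\<lambda>n. d \<beta> + exp (inverse (real (Suc n))) * S) \<longlonglongrightarrow> d \<beta> + exp 0 * S"
    by (intro tendsto_intros LIMSEQ_inverse_real_of_nat)
  then have "0 \<le> d \<beta> + exp 0 * S"
    by (rule LIMSEQ_le_const) (use approx in auto)
  then show ?thesis
    unfolding S_def using sum_exp_factor[OF \<open>finite A\<close> \<open>\<beta> \<in> A\<close>, of d y] by (simp add: mult.commute)
qed

lemma circuit_weighted_AM_GM:
  assumes X: "X \<noteq> {}" and "finite A" "\<beta> \<in> A"
    and l: "l \<in> Nbeta A \<beta>" "l \<beta> = -1" "sigmaA X A l < \<infinity>" and x: "x \<in> X"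
  shows "exp (\<beta> \<bullet> x - y \<beta> - phi_at X A y l) \<le> (\<Sum>\<alpha>\<in>A - {\<beta>}. l \<alpha> * exp (\<alpha> \<bullet> x - y \<alpha>))"
proof -
  define A' where "A' = A - {\<beta>}"
  have l_nonneg: "0 \<le> l \<alpha>" if "\<alpha> \<in> A'" for \<alpha> using l(1) that unfolding Nbeta_def A'_def by auto
  have l_sum: "(\<Sum>\<alpha>\<in>A'. l \<alpha>) = 1"
    using Nbeta_eq_neg_sum[OF l(1) \<open>finite A\<close> \<open>\<beta> \<in> A\<close>] l(2) unfolding A'_def by simp
  have "finite A'" using \<open>finite A\<close> unfolding A'_def by simp
  have "A' \<noteq> {}" using l_sum by auto
  have shift: "(\<Sum>\<alpha>\<in>A. l \<alpha> * w \<alpha>) = (\<Sum>\<alpha>\<in>A'. l \<alpha> * w \<alpha>) - w \<beta>" for w :: "'a \<Rightarrow> real"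
    using sum.remove[OF \<open>finite A\<close> \<open>\<beta> \<in> A\<close>, of "\<lambda>\<alpha>. l \<alpha> * w \<alpha>"] l(2) unfolding A'_def by simp
  have "\<beta> \<bullet> x - y \<beta> - phi_at X A y l \<le> (\<Sum>\<alpha>\<in>A'. l \<alpha> * (\<alpha> \<bullet> x - y \<alpha>))"
    using sigmaA_ge_real[OF X x l(3)] shift[of "\<lambda>\<alpha>. \<alpha> \<bullet> x"] shift[of y]
    unfolding phi_at_def by (simp add: sum_subtractf right_diff_distrib mult.commute)
  then have "exp (\<beta> \<bullet> x - y \<beta> - phi_at X A y l) \<le> exp (\<Sum>\<alpha>\<in>A'. l \<alpha> *\<^sub>R (\<alpha> \<bullet> x - y \<alpha>))"
    by simp
  also have "\<dots> \<le> (\<Sum>\<alpha>\<in>A'. l \<alpha> * exp (\<alpha> \<bullet> x - y \<alpha>))"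
    using convex_on_sum[OF \<open>finite A'\<close> \<open>A' \<noteq> {}\<close> exp_convex l_sum] l_nonneg by simp
  finally show ?thesis unfolding A'_def .
qed

lemma SAGE_beta_dual_ln_phi_nonneg:
  assumes X: "X \<noteq> {}" and "finite A" "\<beta> \<in> A"
    and l: "l \<in> Nbeta A \<beta>" "l \<beta> = -1" "sigmaA X A l < \<infinity>"
    and v_pos: "\<And>\<alpha>. \<alpha> \<in> A \<Longrightarrow> 0 < v \<alpha>"
    and dual: "\<And>c. c \<in> SAGE_beta X A \<beta> \<Longrightarrow> 0 \<le> (\<Sum>\<alpha>\<in>A. v \<alpha> * c \<alpha>)"
  shows "0 \<le> phi_at X A (\<lambda>\<alpha>. ln (v \<alpha>)) l"
proof -
  define y where "y \<alpha> = ln (v \<alpha>)" for \<alpha>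
  define K where "K = exp (- phi_at X A y l - y \<beta>)"
  define c where "c \<alpha> = (if \<alpha> \<in> A then if \<alpha> = \<beta> then - K else l \<alpha> * exp (- y \<alpha>) else 0)" for \<alpha>
  have v_exp: "v \<alpha> = exp (y \<alpha>)" if "\<alpha> \<in> A" for \<alpha> using v_pos[OF that] unfolding y_def by simp
  have "0 \<le> signomial A c x" if x: "x \<in> X" for x
  proof -
    have "K * exp (\<beta> \<bullet> x) = exp (\<beta> \<bullet> x - y \<beta> - phi_at X A y l)"
      unfolding K_def by (simp add: mult_exp_exp algebra_simps)
    also have "\<dots> \<le> (\<Sum>\<alpha>\<in>A - {\<beta>}. l \<alpha> * exp (\<alpha> \<bullet> x - y \<alpha>))"
      by (rule circuit_weighted_AM_GM[OF X \<open>finite A\<close> \<open>\<beta> \<in> A\<close> l x])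
    also have "\<dots> = (\<Sum>\<alpha>\<in>A - {\<beta>}. c \<alpha> * exp (\<alpha> \<bullet> x))"
      by (intro sum.cong) (simp_all add: c_def exp_diff exp_minus field_simps)
    finally show ?thesis
      unfolding signomial_def sum.remove[OF \<open>finite A\<close> \<open>\<beta> \<in> A\<close>] using \<open>\<beta> \<in> A\<close> by (simp add: c_def)
  qed
  then have "c \<in> SAGE_beta X A \<beta>"
    using l(1) unfolding SAGE_beta_def RA_def Nbeta_def c_def by auto
  moreover have "(\<Sum>\<alpha>\<in>A. v \<alpha> * c \<alpha>) = 1 - exp (- phi_at X A y l)"
  proof -
    have "(\<Sum>\<alpha>\<in>A - {\<beta>}. v \<alpha> * c \<alpha>) = (\<Sum>\<alpha>\<in>A - {\<beta>}. l \<alpha>)"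
      by (intro sum.cong) (simp_all add: c_def v_exp exp_minus)
    also have "\<dots> = 1"
      using Nbeta_eq_neg_sum[OF l(1) \<open>finite A\<close> \<open>\<beta> \<in> A\<close>] l(2) by simp
    finally show ?thesis
      unfolding sum.remove[OF \<open>finite A\<close> \<open>\<beta> \<in> A\<close>] using \<open>\<beta> \<in> A\<close>
      by (simp add: c_def K_def v_exp exp_diff exp_minus field_simps)
  qed
  ultimately have "exp (- phi_at X A y l) \<le> 1" using dual by fastforce
  then show ?thesis unfolding y_def by simp
qed

lemma exp_vec_in_SAGE_dual:
  assumes X: "X \<noteq> {}" "convex X" and "finite A" and y: "(y, 1) \<in> circuit_graph_dual X A"
  shows "exp_vec A y \<in> SAGE_dual X A"
proof -
  have phi_nonneg: "\<forall>l\<in>Lambda_X X A. 0 \<le> phi_at X A y l"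
    using y unfolding circuit_graph_dual_iff by blast
  have "0 \<le> (\<Sum>\<alpha>\<in>A. exp_vec A y \<alpha> * c \<alpha>)" if "c \<in> SAGE X A" for c
  proof -
    obtain f where f: "\<forall>\<beta>\<in>A. f \<beta> \<in> SAGE_beta X A \<beta>" and c: "c = (\<lambda>\<alpha>. \<Sum>\<beta>\<in>A. f \<beta> \<alpha>)"
      using \<open>c \<in> SAGE X A\<close> unfolding SAGE_def by blast
    have "0 \<le> (\<Sum>\<alpha>\<in>A. exp (y \<alpha>) * f \<beta> \<alpha>)" if "\<beta> \<in> A" for \<beta>
    proof (rule SAGE_beta_dual_nonneg[OF X \<open>finite A\<close> that])
      fix \<nu> assume "\<nu> \<in> Nbeta A \<beta>"
      then show "0 \<le> ereal (\<Sum>\<alpha>\<in>A. y \<alpha> * \<nu> \<alpha>) + sigmaA X A \<nu>"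
      proof (rule Nbeta_phi_nonneg_if_circuits[OF X(1) \<open>finite A\<close> that, rotated])
        fix l assume "X_circuit X A \<beta> l" "l \<beta> = -1"
        with \<open>\<beta> \<in> A\<close> have "l \<in> Lambda_X X A" unfolding Lambda_X_def by blast
        with phi_nonneg show "0 \<le> phi_at X A y l" by blast
      qed
    qed (use f that in blast)
    then have "0 \<le> (\<Sum>\<beta>\<in>A. \<Sum>\<alpha>\<in>A. exp (y \<alpha>) * f \<beta> \<alpha>)" by (rule sum_nonneg)
    also have "\<dots> = (\<Sum>\<alpha>\<in>A. \<Sum>\<beta>\<in>A. exp (y \<alpha>) * f \<beta> \<alpha>)" by (rule sum.swap)
    also have "\<dots> = (\<Sum>\<alpha>\<in>A. exp_vec A y \<alpha> * c \<alpha>)"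
      unfolding c exp_vec_def by (simp add: sum_distrib_left)
    finally show ?thesis .
  qed
  then show ?thesis unfolding SAGE_dual_def RA_def exp_vec_def by auto
qed

lemma positive_SAGE_dual_in_exp_image:
  assumes X: "X \<noteq> {}" and "finite A" and v: "v \<in> SAGE_dual X A" "\<forall>\<alpha>\<in>A. 0 < v \<alpha>"
  shows "\<exists>y. v = exp_vec A y \<and> y \<in> RA A \<and> (y, 1) \<in> circuit_graph_dual X A"
proof (intro exI conjI)
  define y where "y \<alpha> = (if \<alpha> \<in> A then ln (v \<alpha>) else 0)" for \<alpha>
  show "y \<in> RA A" unfolding RA_def y_def by simp
  show "v = exp_vec A y"
    using v unfolding exp_vec_def y_def SAGE_dual_def RA_def by auto
  have "0 \<le> phi_at X A y l" if "l \<in> Lambda_X X A" for l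
  proof -
    obtain \<beta> where "\<beta> \<in> A" "X_circuit X A \<beta> l" "l \<beta> = -1"
      using \<open>l \<in> Lambda_X X A\<close> unfolding Lambda_X_def by blast
    then have l: "l \<in> Nbeta A \<beta>" "sigmaA X A l < \<infinity>"
      unfolding X_circuit_def sigmaA_def by auto
    have "0 \<le> phi_at X A (\<lambda>\<alpha>. ln (v \<alpha>)) l"
    proof (rule SAGE_beta_dual_ln_phi_nonneg[OF X \<open>finite A\<close> \<open>\<beta> \<in> A\<close> l(1) \<open>l \<beta> = -1\<close> l(2)])
      show "0 < v \<alpha>" if "\<alpha> \<in> A" for \<alpha> using v(2) that by blast
      show "0 \<le> (\<Sum>\<alpha>\<in>A. v \<alpha> * c \<alpha>)" if "c \<in> SAGE_beta X A \<beta>" for c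
        using v(1) that SAGE_beta_subset_SAGE[OF \<open>finite A\<close> \<open>\<beta> \<in> A\<close>] unfolding SAGE_dual_def by blast
    qed
    also have "phi_at X A (\<lambda>\<alpha>. ln (v \<alpha>)) l = phi_at X A y l"
      unfolding phi_at_def y_def by simp
    finally show ?thesis .
  qed
  with \<open>y \<in> RA A\<close> show "(y, 1) \<in> circuit_graph_dual X A"
    unfolding circuit_graph_dual_iff by blast
qed

lemma SAGE_dual_subset_closure_positive:
  assumes X: "X \<noteq> {}" and "finite A"
  shows "SAGE_dual X A \<subseteq> closure {v \<in> SAGE_dual X A. \<forall>\<alpha>\<in>A. 0 < v \<alpha>}"
proof
  fix v assume v: "v \<in> SAGE_dual X A"
  obtain x where "x \<in> X" using X by auto
  define w where "w = exp_vec A (\<lambda>\<alpha>. \<alpha> \<bullet> x)"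
  have w: "w \<in> SAGE_dual X A" unfolding w_def using exp_vec_inner_in_SAGE_dual[OF \<open>x \<in> X\<close>] .
  define g where "g t = (\<lambda>\<alpha>. v \<alpha> + t * w \<alpha>)" for t :: real
  have "g t \<in> {v \<in> SAGE_dual X A. \<forall>\<alpha>\<in>A. 0 < v \<alpha>}" if "0 < t" for t
  proof -
    have "g t \<in> SAGE_dual X A"
      unfolding g_def using SAGE_dual_add_scaled[OF v w] that by simp
    moreover have "0 < g t \<alpha>" if "\<alpha> \<in> A" for \<alpha>
      using SAGE_dual_nonneg[OF v \<open>finite A\<close> that] \<open>0 < t\<close> that
      unfolding g_def w_def exp_vec_def by (simp add: add_nonneg_pos)
    ultimately show ?thesis by simp
  qed
  then have "g (inverse (real (Suc n))) \<in> closure {v \<in> SAGE_dual X A. \<forall>\<alpha>\<in>A. 0 < v \<alpha>}" for n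
    using closure_subset[of "{v \<in> SAGE_dual X A. \<forall>\<alpha>\<in>A. 0 < v \<alpha>}"] by (simp add: subset_iff)
  then have "\<forall>\<^sub>F n in sequentially. g (inverse (real (Suc n))) \<in> closure {v \<in> SAGE_dual X A. \<forall>\<alpha>\<in>A. 0 < v \<alpha>}"
    by simp
  moreover have "continuous_on UNIV g"
    unfolding g_def by (intro continuous_on_coordinatewise_then_product continuous_intros)
  then have "(\<lambda>n. g (inverse (real (Suc n)))) \<longlonglongrightarrow> g 0"
    by (rule continuous_on_tendsto_compose[OF _ LIMSEQ_inverse_real_of_nat]) simp_all
  then have "(\<lambda>n. g (inverse (real (Suc n)))) \<longlonglongrightarrow> v" unfolding g_def by simp
  ultimately show "v \<in> closure {v \<in> SAGE_dual X A. \<forall>\<alpha>\<in>A. 0 < v \<alpha>}"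
    by (intro Lim_in_closed_set[OF closed_closure]) simp_all
qed

theorem theorem5p4:
  fixes X :: "'a::euclidean_space set" and A :: "'a set"
  assumes "X \<noteq> {}" and "closed X" and "convex X"
    and "finite A" and "A \<noteq> {}"
    and "\<forall>c::'a \<Rightarrow> real. (\<forall>x\<in>X. (\<Sum>\<alpha>\<in>A. c \<alpha> * exp (\<alpha> \<bullet> x)) = 0) \<longrightarrow> (\<forall>\<alpha>\<in>A. c \<alpha> = 0)"
  shows "SAGE_dual X A =
         closure {exp_vec A y | y. y \<in> RA A \<and> (y, 1) \<in> circuit_graph_dual X A}"
proof -
  let ?S = "{exp_vec A y | y. y \<in> RA A \<and> (y, 1) \<in> circuit_graph_dual X A}"
  have "?S \<subseteq> SAGE_dual X A"
    using exp_vec_in_SAGE_dual[OF assms(1,3,4)] by blast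
  then have "closure ?S \<subseteq> SAGE_dual X A"
    using SAGE_dual_closed by (rule closure_minimal)
  moreover have "{v \<in> SAGE_dual X A. \<forall>\<alpha>\<in>A. 0 < v \<alpha>} \<subseteq> ?S"
    using positive_SAGE_dual_in_exp_image[OF assms(1,4)] by blast
  then have "SAGE_dual X A \<subseteq> closure ?S"
    using SAGE_dual_subset_closure_positive[OF assms(1,4)] closure_mono by blast
  ultimately show ?thesis by blast
qed

end
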